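(* Let $\{p_{(R,\alpha)}(\mathbf{x})\}_{(R,\alpha)}$ be a replacement rule satisfying the Fixation Axiom and Assumption 1, and let $\nu\in(0,1)$. Then the following are equivalent: (a) $\rho_A>\rho_a$; (b) $\mathbb{E}_{\mathrm{RMC}}[\Delta_{\mathrm{sel}}]>0$; (c) $\mathbb{E}_{\mathrm{RMC}}[\hat\Delta_{\mathrm{sel}}]>0$; (d) $\frac{d}{du}\mathbb{E}_{\mathrm{MSS}}[\Delta_{\mathrm{sel}}]\big|_{u=0}>0$; (e) $\frac{d}{du}\mathbb{E}_{\mathrm{MSS}}[\hat\Delta_{\mathrm{sel}}]\big|_{u=0}>0$; (f) $\lim_{u\to0}\mathbb{E}_{\mathrm{MSS}}[x]>\nu$. Moreover $\lim_{u\to0}\mathbb{E}_{\mathrm{MSS}}[x]=\lim_{u\to0}\mathbb{E}_{\mathrm{MSS}}[\hat x]$.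
   Context: Setting. $G$ is a finite nonempty set of genetic sites, $n=|G|$. A state is $\mathbf{x}\in\{0,1\}^G$ ($x_g=1$: allele $A$ at $g$; $0$: allele $a$). For $S\subseteq G$, $\mathbf{1}_S$ has $x_g=1$ iff $g\in S$; $\mathbf{a}=\mathbf{1}_\emptyset$, $\mathbf{A}=\mathbf{1}_G$. A replacement event is $(R,\alpha)$ with $R\subseteq G$, $\alpha:R\to G$; a replacement rule gives for each state a probability distribution $\{p_{(R,\alpha)}(\mathbf{x})\}$ over events. With mutation probability $u\in[0,1]$ and bias $\nu\in(0,1)$, the evolutionary Markov chain moves from $\mathbf{x}$: draw $(R,\alpha)$ with probability $p_{(R,\alpha)}(\mathbf{x})$; independently for $g\in R$, $x'_g=x_{\alpha(g)}$ w.p. $1-u$, $x'_g=1$ w.p. $u\nu$, $x'_g=0$ w.p. $u(1-\nu)$; $x'_g=x_g$ for $g\notin R$. $P^{(t)}_{\mathbf{x}\to\mathbf{y}}$ are $t$-step transition probabilities. Fixation Axiom: there exist $g\in G$, $m\ge1$, events $(R_k,\alpha_k)_{k=1}^m$ with $p_{(R_k,\alpha_k)}(\mathbf{x})>0$ for all $k,\mathbf{x}$, $g\in R_k$ for some $k$, and $\tilde\alpha_1\circ\cdots\circ\tilde\alpha_m(h)=g$ for all $h$, where $\tilde\alpha_k$ equals $\alpha_k$ on $R_k$ and the identity elsewhere. Quantities: $e_{gh}(\mathbf{x})=\sum_{(R,\alpha):h\in R,\alpha(h)=g}p_{(R,\alpha)}(\mathbf{x})$, $b_g=\sum_he_{gh}$,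 $d_g=\sum_he_{hg}$, $b=\sum_gb_g$, $x=\frac1n\sum_gx_g$, $\Delta_{\mathrm{sel}}(\mathbf{x})=\sum_gx_g(b_g(\mathbf{x})-d_g(\mathbf{x}))$. Fixation probabilities at $u=0$: $\mu_A(\mathbf{1}_{\{g\}})=d_g(\mathbf{a})/b(\mathbf{a})$ (zero elsewhere), $\mu_a(\mathbf{1}_{G\setminus\{g\}})=d_g(\mathbf{A})/b(\mathbf{A})$ (zero elsewhere), $\rho_A=\sum_\mathbf{x}\mu_A(\mathbf{x})\lim_tP^{(t)}_{\mathbf{x}\to\mathbf{A}}$, $\rho_a=\sum_\mathbf{x}\mu_a(\mathbf{x})\lim_tP^{(t)}_{\mathbf{x}\to\mathbf{a}}$. For $u>0$, $\pi_{\mathrm{MSS}}$ is the unique stationary distribution, extended smoothly to $u=0$ by limits ($\frac{d}{du}|_{u=0}$ is the one-sided derivative); $\pi_{\mathrm{RMC}}(\mathbf{x})=\lim_{u\to0}\pi_{\mathrm{MSS}}(\mathbf{x})/(1-\pi_{\mathrm{MSS}}(\mathbf{a})-\pi_{\mathrm{MSS}}(\mathbf{A}))$ for $\mathbf{x}\notin\{\mathbf{a},\mathbf{A}\}$. Assumption 1: $p_{(R,\alpha)}(\mathbf{A})=p_{(R,\alpha)}(\mathbf{a})$ for every event; write $e^\circ_{gh}=e_{gh}(\mathbf{a})=e_{gh}(\mathbf{A})$, $d^\circ_g=d_g(\mathbf{a})$. Reproductive values: $(v_g)_{g\in G}$ is the unique solution of $d^\circ_gv_g=\sum_he^\circ_{gh}v_h$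 for all $g$ and $\sum_gv_g=n$. $\hat x=\frac1n\sum_gv_gx_g$; $\hat b_g(\mathbf{x})=\sum_he_{gh}(\mathbf{x})v_h$; $\hat d_g(\mathbf{x})=v_gd_g(\mathbf{x})$; $\hat\Delta_{\mathrm{sel}}(\mathbf{x})=\sum_gx_g(\hat b_g(\mathbf{x})-\hat d_g(\mathbf{x}))$. *)

theory Defs
  imports Complex_Main
begin

text \<open>Sites: a finite type 'g (so G = UNIV, nonempty). A state x in {0,1}^G is
  represented by the set S = {g. x_g = 1} :: 'g set.  A replacement event (R, alpha)
  with alpha : R -> G is represented canonically by (R, alpha~) where alpha~ extends
  alpha by the identity outside R.\<close>

type_synonym 'g event = "'g set \<times> ('g \<Rightarrow> 'g)"

definition events :: "'g event set" where
  "events = {(R, \<alpha>). \<forall>h. h \<notin> R \<longrightarrow> \<alpha> h = h}"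

definition replacement_rule :: "('g set \<Rightarrow> 'g event \<Rightarrow> real) \<Rightarrow> bool" where
  "replacement_rule p \<longleftrightarrow>
     (\<forall>x e. 0 \<le> p x e) \<and> (\<forall>x e. e \<notin> events \<longrightarrow> p x e = 0) \<and>
     (\<forall>x. (\<Sum>e\<in>events. p x e) = 1)"

definition fixation_axiom :: "('g set \<Rightarrow> 'g event \<Rightarrow> real) \<Rightarrow> bool" where
  "fixation_axiom p \<longleftrightarrow>
     (\<exists>(g::'g) (es :: 'g event list).
        length es \<ge> 1 \<and>
        (\<forall>k < length es. es ! k \<in> events \<and> (\<forall>x. p x (es ! k) > 0)) \<and>
        (\<exists>k < length es. g \<in> fst (es ! k)) \<and>
        (\<forall>h. foldr (\<circ>) (map snd es) id h = g))"

definition assumption1 :: "('g set \<Rightarrow> 'g event \<Rightarrow> real) \<Rightarrow> bool" where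
  "assumption1 p \<longleftrightarrow> (\<forall>e. p UNIV e = p {} e)"

definition e_rate :: "('g set \<Rightarrow> 'g event \<Rightarrow> real) \<Rightarrow> 'g \<Rightarrow> 'g \<Rightarrow> 'g set \<Rightarrow> real" where
  "e_rate p g h x = (\<Sum>e\<in>{(R, \<alpha>) \<in> events. h \<in> R \<and> \<alpha> h = g}. p x e)"

definition b_rate :: "('g set \<Rightarrow> 'g event \<Rightarrow> real) \<Rightarrow> 'g \<Rightarrow> 'g set \<Rightarrow> real" where
  "b_rate p g x = (\<Sum>h\<in>UNIV. e_rate p g h x)"

definition d_rate :: "('g set \<Rightarrow> 'g event \<Rightarrow> real) \<Rightarrow> 'g \<Rightarrow> 'g set \<Rightarrow> real" where
  "d_rate p g x = (\<Sum>h\<in>UNIV. e_rate p h g x)"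

definition b_total :: "('g set \<Rightarrow> 'g event \<Rightarrow> real) \<Rightarrow> 'g set \<Rightarrow> real" where
  "b_total p x = (\<Sum>g\<in>UNIV. b_rate p g x)"

definition freqA :: "'g set \<Rightarrow> real" where
  "freqA x = real (card x) / real (card (UNIV :: 'g set))"

definition Delta_sel :: "('g set \<Rightarrow> 'g event \<Rightarrow> real) \<Rightarrow> 'g set \<Rightarrow> real" where
  "Delta_sel p x = (\<Sum>g\<in>x. b_rate p g x - d_rate p g x)"

definition repro_values :: "('g set \<Rightarrow> 'g event \<Rightarrow> real) \<Rightarrow> 'g \<Rightarrow> real" where
  "repro_values p = (THE v. (\<forall>g. d_rate p g {} * v g = (\<Sum>h\<in>UNIV. e_rate p g h {} * v h)) \<and>
                         (\<Sum>g\<in>UNIV. v g) = real (card (UNIV :: 'g set)))"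

definition freqA_hat :: "('g set \<Rightarrow> 'g event \<Rightarrow> real) \<Rightarrow> 'g set \<Rightarrow> real" where
  "freqA_hat p x = (\<Sum>g\<in>x. repro_values p g) / real (card (UNIV :: 'g set))"

definition b_hat :: "('g set \<Rightarrow> 'g event \<Rightarrow> real) \<Rightarrow> 'g \<Rightarrow> 'g set \<Rightarrow> real" where
  "b_hat p g x = (\<Sum>h\<in>UNIV. e_rate p g h x * repro_values p h)"

definition d_hat :: "('g set \<Rightarrow> 'g event \<Rightarrow> real) \<Rightarrow> 'g \<Rightarrow> 'g set \<Rightarrow> real" where
  "d_hat p g x = repro_values p g * d_rate p g x"

definition Delta_sel_hat :: "('g set \<Rightarrow> 'g event \<Rightarrow> real) \<Rightarrow> 'g set \<Rightarrow> real" where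
  "Delta_sel_hat p x = (\<Sum>g\<in>x. b_hat p g x - d_hat p g x)"

definition site_factor :: "real \<Rightarrow> real \<Rightarrow> 'g event \<Rightarrow> 'g set \<Rightarrow> 'g set \<Rightarrow> 'g \<Rightarrow> real" where
  "site_factor u \<nu> e x y g =
     (if g \<in> fst e then
        (1 - u) * (if (snd e g \<in> x) = (g \<in> y) then 1 else 0)
        + (if g \<in> y then u * \<nu> else u * (1 - \<nu>))
      else (if (g \<in> x) = (g \<in> y) then 1 else 0))"

definition trans :: "('g set \<Rightarrow> 'g event \<Rightarrow> real) \<Rightarrow> real \<Rightarrow> real \<Rightarrow> 'g set \<Rightarrow> 'g set \<Rightarrow> real" where
  "trans p \<nu> u x y = (\<Sum>e\<in>events. p x e * (\<Prod>g\<in>UNIV. site_factor u \<nu> e x y g))"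

fun trans_pow :: "('g set \<Rightarrow> 'g event \<Rightarrow> real) \<Rightarrow> real \<Rightarrow> real \<Rightarrow> nat \<Rightarrow> 'g set \<Rightarrow> 'g set \<Rightarrow> real" where
  "trans_pow p \<nu> u 0 x y = (if x = y then 1 else 0)"
| "trans_pow p \<nu> u (Suc t) x y = (\<Sum>z\<in>UNIV. trans_pow p \<nu> u t x z * trans p \<nu> u z y)"

definition rho_A :: "('g set \<Rightarrow> 'g event \<Rightarrow> real) \<Rightarrow> real \<Rightarrow> real" where
  "rho_A p \<nu> = (\<Sum>g\<in>UNIV. (d_rate p g {} / b_total p {}) *
                    lim (\<lambda>t. trans_pow p \<nu> 0 t {g} UNIV))"

definition rho_a :: "('g set \<Rightarrow> 'g event \<Rightarrow> real) \<Rightarrow> real \<Rightarrow> real" where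
  "rho_a p \<nu> = (\<Sum>g\<in>UNIV. (d_rate p g UNIV / b_total p UNIV) *
                    lim (\<lambda>t. trans_pow p \<nu> 0 t (UNIV - {g}) {}))"

definition stationary :: "('g set \<Rightarrow> 'g event \<Rightarrow> real) \<Rightarrow> real \<Rightarrow> real \<Rightarrow> ('g set \<Rightarrow> real) \<Rightarrow> bool" where
  "stationary p \<nu> u \<pi> \<longleftrightarrow> (\<forall>x. 0 \<le> \<pi> x) \<and> (\<Sum>x\<in>UNIV. \<pi> x) = 1 \<and>
      (\<forall>y. (\<Sum>x\<in>UNIV. \<pi> x * trans p \<nu> u x y) = \<pi> y)"

definition pi_MSS0 :: "('g set \<Rightarrow> 'g event \<Rightarrow> real) \<Rightarrow> real \<Rightarrow> real \<Rightarrow> 'g set \<Rightarrow> real" where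
  "pi_MSS0 p \<nu> u = (THE \<pi>. stationary p \<nu> u \<pi>)"

definition pi_MSS :: "('g set \<Rightarrow> 'g event \<Rightarrow> real) \<Rightarrow> real \<Rightarrow> real \<Rightarrow> 'g set \<Rightarrow> real" where
  "pi_MSS p \<nu> u x = (if 0 < u then pi_MSS0 p \<nu> u x
                      else Lim (at_right 0) (\<lambda>w. pi_MSS0 p \<nu> w x))"

definition E_MSS :: "('g set \<Rightarrow> 'g event \<Rightarrow> real) \<Rightarrow> real \<Rightarrow> ('g set \<Rightarrow> real) \<Rightarrow> real \<Rightarrow> real" where
  "E_MSS p \<nu> f u = (\<Sum>x\<in>UNIV. pi_MSS p \<nu> u x * f x)"

definition pi_RMC :: "('g set \<Rightarrow> 'g event \<Rightarrow> real) \<Rightarrow> real \<Rightarrow> 'g set \<Rightarrow> real" where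
  "pi_RMC p \<nu> x = Lim (at_right 0)
     (\<lambda>u. pi_MSS0 p \<nu> u x / (1 - pi_MSS0 p \<nu> u {} - pi_MSS0 p \<nu> u UNIV))"

definition E_RMC :: "('g set \<Rightarrow> 'g event \<Rightarrow> real) \<Rightarrow> real \<Rightarrow> ('g set \<Rightarrow> real) \<Rightarrow> real" where
  "E_RMC p \<nu> f = (\<Sum>x\<in>UNIV - {{}, UNIV}. pi_RMC p \<nu> x * f x)"

end

theory Submission
  imports Defs "HOL-Analysis.Analysis" "HOL-Computational_Algebra.Polynomial"
begin

text \<open>For \<open>u > 0\<close> the all-\<open>A\<close> state is reachable from every state, so the chain has a unique
  stationary distribution \<open>\<pi>\<^sub>u\<close>; by Cramer's rule \<open>\<pi>\<^sub>u\<close> is a bounded rational function of \<open>u\<close>,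
  so all limits \<open>u \<rightarrow> 0\<close> exist. For site weights \<open>w\<close> (constant, or the reproductive values)
  the expected weighted allele count is stationary, which says that under \<open>\<pi>\<^sub>u\<close> the expected
  selection term equals \<open>u\<close> times the expected mutational flux. As \<open>u \<rightarrow> 0\<close>, \<open>\<pi>\<^sub>u\<close>
  concentrates on the two monomorphic states while the polymorphic mass is of exact
  order \<open>u\<close>; hence the flux tends to \<open>W (\<pi>\<^sub>0(A) - \<nu>)\<close> with \<open>W > 0\<close>, which gives the derivative at
  \<open>u = 0\<close> and the sign of the rare-mutation expectation, and the mean frequency at \<open>u = 0\<close>
  (weighted or not) is \<open>\<pi>\<^sub>0(A)\<close>. Finally, stationarity applied to the neutral fixation
  probability of \<open>A\<close>, expanded to first order in \<open>u\<close>, balances the mutant flux out of the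
  monomorphic states: \<open>\<pi>\<^sub>0(a) \<nu> \<rho>\<^sub>A = \<pi>\<^sub>0(A) (1 - \<nu>) \<rho>\<^sub>a\<close>, so \<open>\<pi>\<^sub>0(A) > \<nu>\<close> iff \<open>\<rho>\<^sub>A > \<rho>\<^sub>a\<close>.\<close>

section \<open>Finite Markov chains\<close>

definition stochastic :: "('a::finite \<Rightarrow> 'a \<Rightarrow> real) \<Rightarrow> bool" where
  "stochastic P \<longleftrightarrow> (\<forall>x y. 0 \<le> P x y) \<and> (\<forall>x. (\<Sum>y\<in>UNIV. P x y) = 1)"

definition invariant :: "('a::finite \<Rightarrow> 'a \<Rightarrow> real) \<Rightarrow> ('a \<Rightarrow> real) \<Rightarrow> bool" where
  "invariant P \<mu> \<longleftrightarrow> (\<forall>y. (\<Sum>x\<in>UNIV. \<mu> x * P x y) = \<mu> y)"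

definition prob_vector :: "('a::finite \<Rightarrow> real) \<Rightarrow> bool" where
  "prob_vector \<pi> \<longleftrightarrow> (\<forall>x. 0 \<le> \<pi> x) \<and> (\<Sum>x\<in>UNIV. \<pi> x) = 1"

definition positive_steps :: "('a \<Rightarrow> 'a \<Rightarrow> real) \<Rightarrow> ('a \<times> 'a) set" where
  "positive_steps P = {(x, y). 0 < P x y}"

lemma invariant_sum_expectation:
  assumes "invariant P \<mu>"
  shows "(\<Sum>x\<in>UNIV. \<mu> x * (\<Sum>y\<in>UNIV. P x y * f y)) = (\<Sum>y\<in>UNIV. \<mu> y * f y)"
proof -
  have "(\<Sum>x\<in>UNIV. \<mu> x * (\<Sum>y\<in>UNIV. P x y * f y)) = (\<Sum>y\<in>UNIV. (\<Sum>x\<in>UNIV. \<mu> x * P x y) * f y)"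
    unfolding sum_distrib_left sum_distrib_right by (subst sum.swap) (simp add: mult.assoc)
  also have "\<dots> = (\<Sum>y\<in>UNIV. \<mu> y * f y)" using assms by (simp add: invariant_def)
  finally show ?thesis .
qed

lemma invariant_lincomb:
  assumes "invariant P \<mu>" "invariant P \<mu>'"
  shows "invariant P (\<lambda>x. a * \<mu> x + b * \<mu>' x)"
proof -
  have "(\<Sum>x\<in>UNIV. (a * \<mu> x + b * \<mu>' x) * P x y)
      = a * (\<Sum>x\<in>UNIV. \<mu> x * P x y) + b * (\<Sum>x\<in>UNIV. \<mu>' x * P x y)" for y
    by (simp add: sum.distrib sum_distrib_left ring_distribs mult.assoc)
  then show ?thesis using assms by (simp add: invariant_def)
qed

lemma invariant_abs:
  assumes "stochastic P" "invariant P \<mu>"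
  shows "invariant P (\<lambda>x. \<bar>\<mu> x\<bar>)"
proof -
  have P_nonneg: "\<And>x y. 0 \<le> P x y" and P_sum: "\<And>x. (\<Sum>y\<in>UNIV. P x y) = 1"
    using assms(1) by (auto simp: stochastic_def)
  define \<mu>' where "\<mu>' y = (\<Sum>x\<in>UNIV. \<bar>\<mu> x\<bar> * P x y)" for y
  have le: "\<bar>\<mu> y\<bar> \<le> \<mu>' y" for y
  proof -
    have "\<bar>\<mu> y\<bar> = \<bar>\<Sum>x\<in>UNIV. \<mu> x * P x y\<bar>" using assms(2) by (simp add: invariant_def)
    also have "\<dots> \<le> (\<Sum>x\<in>UNIV. \<bar>\<mu> x * P x y\<bar>)" by (rule sum_abs)
    also have "\<dots> = \<mu>' y" unfolding \<mu>'_def using P_nonneg by (simp add: abs_mult)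
    finally show ?thesis .
  qed
  have "(\<Sum>y\<in>UNIV. \<mu>' y) = (\<Sum>x\<in>UNIV. \<bar>\<mu> x\<bar> * (\<Sum>y\<in>UNIV. P x y))"
    unfolding \<mu>'_def sum_distrib_left by (rule sum.swap)
  also have "\<dots> = (\<Sum>y\<in>UNIV. \<bar>\<mu> y\<bar>)" by (simp add: P_sum)
  finally have "(\<Sum>y\<in>UNIV. \<mu>' y - \<bar>\<mu> y\<bar>) = 0" by (simp add: sum_subtractf)
  then have "\<forall>y\<in>UNIV. \<mu>' y - \<bar>\<mu> y\<bar> = 0" using le by (subst sum_nonneg_eq_0_iff[symmetric]) auto
  then show ?thesis unfolding invariant_def \<mu>'_def by auto
qed

lemma invariant_pos_if_reachable:
  assumes "stochastic P" "invariant P \<mu>" "\<forall>x. 0 \<le> \<mu> x" "0 < \<mu> x" "(x, y) \<in> (positive_steps P)\<^sup>*"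
  shows "0 < \<mu> y"
  using assms(5)
proof (induction rule: rtrancl_induct)
  case base
  show ?case using assms(4) .
next
  case (step y z)
  then have "0 < \<mu> y * P y z" by (simp add: positive_steps_def zero_less_mult_iff)
  also have "\<dots> \<le> (\<Sum>x\<in>UNIV. \<mu> x * P x z)"
    by (rule member_le_sum) (use assms(1,3) in \<open>auto simp: stochastic_def\<close>)
  also have "\<dots> = \<mu> z" using assms(2) by (simp add: invariant_def)
  finally show ?case .
qed

text \<open>If some state \<open>z\<close> is reachable from everywhere, a signed invariant measure of total mass
  zero vanishes: its positive and negative parts are both invariant, have equal mass, and
  an invariant nonnegative measure that is nonzero somewhere charges \<open>z\<close>.\<close>

lemma invariant_eq_0_if_sum_eq_0:
  assumes "stochastic P" "\<forall>x. (x, z) \<in> (positive_steps P)\<^sup>*"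
    and "invariant P \<mu>" "(\<Sum>x\<in>UNIV. \<mu> x) = 0"
  shows "\<mu> = (\<lambda>_. 0)"
proof (rule ccontr)
  assume "\<mu> \<noteq> (\<lambda>_. 0)"
  then obtain x0 where x0: "\<mu> x0 \<noteq> 0" by auto
  have "\<bar>\<mu> x0\<bar> \<le> (\<Sum>x\<in>UNIV. \<bar>\<mu> x\<bar>)" by (rule member_le_sum) auto
  then have mass_pos: "0 < (\<Sum>x\<in>UNIV. \<bar>\<mu> x\<bar>)" using x0 by linarith
  have charges_z: "0 < \<mu>' z"
    if "\<mu>' = (\<lambda>x. (1/2) * \<bar>\<mu> x\<bar> + s * \<mu> x)" "\<bar>s\<bar> = 1/2" for \<mu>' s
  proof -
    have inv: "invariant P \<mu>'"
      unfolding that(1) by (rule invariant_lincomb[OF invariant_abs[OF assms(1,3)] assms(3)])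
    have nonneg: "\<forall>x. 0 \<le> \<mu>' x"
    proof
      fix x
      have "\<bar>s * \<mu> x\<bar> = (1/2) * \<bar>\<mu> x\<bar>" by (simp add: abs_mult that(2))
      then show "0 \<le> \<mu>' x" unfolding that(1) using abs_ge_minus_self[of "s * \<mu> x"] by linarith
    qed
    have "(\<Sum>x\<in>UNIV. \<mu>' x) = (1/2) * (\<Sum>x\<in>UNIV. \<bar>\<mu> x\<bar>)"
      using assms(4) unfolding that(1) by (simp only: sum.distrib sum_distrib_left[symmetric])
    then have "0 < (\<Sum>x\<in>UNIV. \<mu>' x)" using mass_pos by simp
    then obtain x1 where "0 < \<mu>' x1" by (meson not_le sum_nonpos)
    then show ?thesis
      by (rule invariant_pos_if_reachable[OF assms(1) inv nonneg]) (use assms(2) in auto)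
  qed
  have "0 < (1/2) * \<bar>\<mu> z\<bar> + (1/2) * \<mu> z" and "0 < (1/2) * \<bar>\<mu> z\<bar> + (-1/2) * \<mu> z"
    using charges_z[OF refl, of "1/2"] charges_z[OF refl, of "-1/2"] by auto
  then show False by linarith
qed

lemma stationary_exists:
  fixes P :: "'a::finite \<Rightarrow> 'a \<Rightarrow> real"
  assumes "stochastic P"
  shows "\<exists>\<pi>. prob_vector \<pi> \<and> invariant P \<pi>"
proof -
  have P_nonneg: "\<And>x y. 0 \<le> P x y" and P_sum: "\<And>x. (\<Sum>y\<in>UNIV. P x y) = 1"
    using assms by (auto simp: stochastic_def)
  define S where "S = {v::real^'a. (\<forall>i. 0 \<le> v$i) \<and> (\<Sum>i\<in>UNIV. v$i) = 1}"
  define f where "f v = (\<chi> y. \<Sum>x\<in>UNIV. v$x * P x y)" for v :: "real^'a"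
  have "closed S" unfolding S_def
    by (intro closed_Collect_conj closed_Collect_all closed_Collect_le closed_Collect_eq continuous_intros)
  moreover have "bounded S"
  proof -
    have "norm v \<le> 1" if "v \<in> S" for v
      using norm_le_l1_cart[of v] that by (simp add: S_def)
    then show ?thesis by (auto simp: bounded_iff)
  qed
  ultimately have "compact S" by (simp add: compact_eq_bounded_closed)
  moreover have "convex S"
    unfolding convex_def S_def
    by (auto simp: sum.distrib sum_distrib_left[symmetric] intro!: add_nonneg_nonneg mult_nonneg_nonneg)
  moreover have "(\<chi> i. 1 / real CARD('a)) \<in> S" by (simp add: S_def)
  then have "S \<noteq> {}" by auto
  moreover have "continuous_on S f" unfolding f_def
    by (intro continuous_on_vec_lambda continuous_intros)
  moreover have "f \<in> S \<rightarrow> S"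
  proof
    fix v assume v: "v \<in> S"
    have "(\<Sum>y\<in>UNIV. \<Sum>x\<in>UNIV. v$x * P x y) = (\<Sum>x\<in>UNIV. v$x * (\<Sum>y\<in>UNIV. P x y))"
      unfolding sum_distrib_left by (rule sum.swap)
    then show "f v \<in> S" using v P_nonneg by (auto simp: S_def f_def P_sum intro!: sum_nonneg)
  qed
  ultimately obtain v where "v \<in> S" "f v = v" using brouwer by blast
  then show ?thesis
    by (intro exI[of _ "\<lambda>x. v$x"]) (auto simp: S_def f_def prob_vector_def invariant_def vec_eq_iff)
qed

lemma invariant_eq_sum_mult_stationary:
  assumes "stochastic P" "\<forall>x. (x, z) \<in> (positive_steps P)\<^sup>*"
    and "prob_vector \<pi>" "invariant P \<pi>" "invariant P \<mu>"
  shows "\<mu> = (\<lambda>x. (\<Sum>y\<in>UNIV. \<mu> y) * \<pi> x)"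
proof -
  let ?s = "\<Sum>y\<in>UNIV. \<mu> y"
  have "invariant P (\<lambda>x. 1 * \<mu> x + (- ?s) * \<pi> x)"
    using assms(5,4) by (rule invariant_lincomb)
  moreover have "(\<Sum>x\<in>UNIV. 1 * \<mu> x + (- ?s) * \<pi> x) = 0"
    using assms(3) by (simp add: prob_vector_def sum_subtractf sum_distrib_left[symmetric])
  ultimately have "(\<lambda>x. 1 * \<mu> x + (- ?s) * \<pi> x) = (\<lambda>_. 0)"
    by (rule invariant_eq_0_if_sum_eq_0[OF assms(1,2)])
  then have "\<mu> x = ?s * \<pi> x" for x using fun_cong[of _ _ x] by fastforce
  then show ?thesis by blast
qed

lemma stationary_unique:
  assumes "stochastic P" "\<forall>x. (x, z) \<in> (positive_steps P)\<^sup>*"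
  shows "\<exists>!\<pi>. prob_vector \<pi> \<and> invariant P \<pi>"
proof -
  obtain \<pi> where \<pi>: "prob_vector \<pi>" "invariant P \<pi>" using stationary_exists[OF assms(1)] by blast
  have "\<rho> = \<pi>" if "prob_vector \<rho>" "invariant P \<rho>" for \<rho>
  proof -
    have "\<rho> = (\<lambda>x. (\<Sum>y\<in>UNIV. \<rho> y) * \<pi> x)"
      by (rule invariant_eq_sum_mult_stationary[OF assms \<pi> that(2)])
    also have "(\<Sum>y\<in>UNIV. \<rho> y) = 1" using that(1) by (simp add: prob_vector_def)
    finally show ?thesis by simp
  qed
  then show ?thesis using \<pi> by blast
qed

section \<open>Limits at zero from the right and rational functions\<close>

definition rational_on :: "real set \<Rightarrow> (real \<Rightarrow> real) \<Rightarrow> bool" where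
  "rational_on S f \<longleftrightarrow> (\<exists>P Q. \<forall>u\<in>S. poly Q u \<noteq> 0 \<and> f u = poly P u / poly Q u)"

lemma eventually_at_right_0_le_1: "eventually (\<lambda>u. 0 < u \<and> u \<le> 1) (at_right (0::real))"
  unfolding eventually_at_right_field by (auto intro!: exI[of _ 1])

lemma rational_on_add:
  assumes "rational_on S f" "rational_on S g"
  shows "rational_on S (\<lambda>u. f u + g u)"
proof -
  obtain P Q P' Q' where "\<forall>u\<in>S. poly Q u \<noteq> 0 \<and> f u = poly P u / poly Q u"
    and "\<forall>u\<in>S. poly Q' u \<noteq> 0 \<and> g u = poly P' u / poly Q' u"
    using assms by (auto simp: rational_on_def)
  then have "\<forall>u\<in>S. poly (Q * Q') u \<noteq> 0 \<and>
      f u + g u = poly (P * Q' + P' * Q) u / poly (Q * Q') u"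
    by (auto simp: field_simps)
  then show ?thesis unfolding rational_on_def by blast
qed

lemma rational_on_sum:
  assumes "finite A" "\<And>x. x \<in> A \<Longrightarrow> rational_on S (f x)"
  shows "rational_on S (\<lambda>u. \<Sum>x\<in>A. f x u)"
  using assms
proof (induction A rule: finite_induct)
  case empty
  show ?case unfolding rational_on_def by (rule exI[of _ 0], rule exI[of _ 1]) simp
next
  case (insert x A)
  then show ?case by (simp add: rational_on_add)
qed

lemma rational_on_divide:
  assumes "rational_on S f" "rational_on S g" "\<And>u. u \<in> S \<Longrightarrow> g u \<noteq> 0"
  shows "rational_on S (\<lambda>u. f u / g u)"
proof -
  obtain P Q P' Q' where "\<forall>u\<in>S. poly Q u \<noteq> 0 \<and> f u = poly P u / poly Q u"
    and "\<forall>u\<in>S. poly Q' u \<noteq> 0 \<and> g u = poly P' u / poly Q' u"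
    using assms(1,2) by (auto simp: rational_on_def)
  then have "\<forall>u\<in>S. poly (Q * P') u \<noteq> 0 \<and> f u / g u = poly (P * Q') u / poly (Q * P') u"
    using assms(3) by auto
  then show ?thesis unfolding rational_on_def by blast
qed

lemma poly_eq_power_mult_nonroot:
  fixes P :: "real poly"
  assumes "P \<noteq> 0"
  obtains j P1 where "\<And>u. poly P u = u ^ j * poly P1 u" "poly P1 0 \<noteq> 0"
proof -
  obtain q where q: "P = [:- 0, 1:] ^ order 0 P * q" "\<not> [:- 0, 1:] dvd q"
    using order_decomp[OF assms] by blast
  have "poly q 0 \<noteq> 0" using q(2) by (simp add: poly_eq_0_iff_dvd)
  moreover have "poly P u = u ^ order 0 P * poly q u" for u
    by (subst q(1)) (simp add: poly_power)
  ultimately show ?thesis using that by blast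
qed

text \<open>If \<open>u\<^sup>k f(u) = u\<^sup>j g(u)\<close> with \<open>g(u) \<rightarrow> c \<noteq> 0\<close>, boundedness of \<open>f\<close> forces \<open>k \<le> j\<close>:
  otherwise \<open>u\<^sup>k\<^sup>-\<^sup>j f(u) = g(u)\<close> would tend both to \<open>c\<close> and to \<open>0\<close>.\<close>

lemma bounded_power_mult_eq_tendsto:
  fixes f g :: "real \<Rightarrow> real"
  assumes g: "(g \<longlongrightarrow> c) (at_right 0)" "c \<noteq> 0"
    and eq: "eventually (\<lambda>u. u ^ k * f u = u ^ j * g u) (at_right 0)"
    and bounded: "eventually (\<lambda>u. \<bar>f u\<bar> \<le> B) (at_right 0)"
  shows "\<exists>L. (f \<longlongrightarrow> L) (at_right 0)"
proof (cases "k \<le> j")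
  case True
  have "eventually (\<lambda>u. u ^ (j - k) * g u = f u) (at_right 0)"
    using eq eventually_at_right_less[of "0::real"]
  proof eventually_elim
    case (elim u)
    have "u ^ j = u ^ k * u ^ (j - k)" using True by (simp add: power_add[symmetric])
    then have "u ^ k * f u = u ^ k * (u ^ (j - k) * g u)" using elim(1) by (simp add: mult.assoc)
    then show ?case using elim(2) by simp
  qed
  moreover have "((\<lambda>u. u ^ (j - k) * g u) \<longlongrightarrow> 0 ^ (j - k) * c) (at_right 0)"
    by (intro tendsto_intros g)
  ultimately show ?thesis using Lim_transform_eventually by blast
next
  case False
  have "eventually (\<lambda>u. u ^ (k - j) * f u = g u) (at_right 0)"
    using eq eventually_at_right_less[of "0::real"]
  proof eventually_elim
    case (elim u)
    have "u ^ k = u ^ j * u ^ (k - j)" using False by (simp add: power_add[symmetric])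
    then have "u ^ j * (u ^ (k - j) * f u) = u ^ j * g u" using elim(1) by (simp add: mult.assoc)
    then show ?case using elim(2) by simp
  qed
  moreover have "((\<lambda>u. u ^ (k - j) * f u) \<longlongrightarrow> 0) (at_right 0)"
  proof (rule Lim_null_comparison)
    show "eventually (\<lambda>u. norm (u ^ (k - j) * f u) \<le> \<bar>B\<bar> * u ^ (k - j)) (at_right 0)"
      using bounded eventually_at_right_less[of "0::real"]
    proof eventually_elim
      case (elim u)
      then have "\<bar>f u\<bar> \<le> \<bar>B\<bar>" by linarith
      then show ?case using elim by (simp add: abs_mult mult.commute mult_right_mono)
    qed
    have "((\<lambda>u. \<bar>B\<bar> * u ^ (k - j)) \<longlongrightarrow> \<bar>B\<bar> * 0 ^ (k - j)) (at_right (0::real))"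
      by (intro tendsto_intros)
    then show "((\<lambda>u. \<bar>B\<bar> * u ^ (k - j)) \<longlongrightarrow> 0) (at_right (0::real))"
      using False by (simp add: power_0_left)
  qed
  ultimately have "(g \<longlongrightarrow> 0) (at_right 0)" by (blast intro: Lim_transform_eventually)
  then show ?thesis using g tendsto_unique[OF trivial_limit_at_right_real] by blast
qed

lemma rational_on_bounded_tendsto:
  assumes "rational_on {0<..1} f" and bounded: "\<And>u. 0 < u \<Longrightarrow> u \<le> 1 \<Longrightarrow> \<bar>f u\<bar> \<le> B"
  shows "\<exists>L. (f \<longlongrightarrow> L) (at_right 0)"
proof -
  obtain P Q where "\<forall>u\<in>{0<..1}. poly Q u \<noteq> 0 \<and> f u = poly P u / poly Q u"
    using assms(1) unfolding rational_on_def by blast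
  then have PQ: "\<And>u. 0 < u \<Longrightarrow> u \<le> 1 \<Longrightarrow> poly Q u \<noteq> 0 \<and> f u = poly P u / poly Q u"
    by simp
  show ?thesis
  proof (cases "P = 0")
    case True
    have "eventually (\<lambda>u. 0 = f u) (at_right 0)"
      using eventually_at_right_0_le_1 by eventually_elim (simp add: PQ True)
    then show ?thesis using tendsto_const Lim_transform_eventually by blast
  next
    case False
    have "Q \<noteq> 0" using PQ[of 1] by auto
    obtain j P1 where P1: "\<And>u. poly P u = u ^ j * poly P1 u" "poly P1 0 \<noteq> 0"
      using poly_eq_power_mult_nonroot[OF False] by blast
    obtain k Q1 where Q1: "\<And>u. poly Q u = u ^ k * poly Q1 u" "poly Q1 0 \<noteq> 0"
      using poly_eq_power_mult_nonroot[OF \<open>Q \<noteq> 0\<close>] by blast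
    have g: "((\<lambda>u. poly P1 u / poly Q1 u) \<longlongrightarrow> poly P1 0 / poly Q1 0) (at_right 0)"
      by (intro tendsto_intros) (use Q1(2) in auto)
    have f_eq: "eventually (\<lambda>u. u ^ k * f u = u ^ j * (poly P1 u / poly Q1 u)) (at_right 0)"
      using eventually_at_right_0_le_1
    proof eventually_elim
      case (elim u)
      then have "poly Q1 u \<noteq> 0" "f u = u ^ j * poly P1 u / (u ^ k * poly Q1 u)"
        using PQ[of u] by (auto simp: P1(1) Q1(1))
      then show ?case using elim by simp
    qed
    have "eventually (\<lambda>u. \<bar>f u\<bar> \<le> B) (at_right 0)"
      using eventually_at_right_0_le_1 by eventually_elim (use bounded in auto)
    then show ?thesis
      using P1(2) Q1(2) by (intro bounded_power_mult_eq_tendsto[OF g _ f_eq]) auto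
  qed
qed

lemma pos_iff_of_tendsto_eventually_mult:
  fixes R S q :: "real \<Rightarrow> real"
  assumes R: "(R \<longlongrightarrow> LR) (at_right 0)" and S: "(S \<longlongrightarrow> LS) (at_right 0)"
    and eq: "eventually (\<lambda>u. R u = S u * q u) (at_right 0)"
    and bounds: "eventually (\<lambda>u. a \<le> q u \<and> q u \<le> b) (at_right 0)" and "0 < a"
  shows "0 < LR \<longleftrightarrow> 0 < LS"
proof
  assume "0 < LS"
  then have "eventually (\<lambda>u. LS / 2 < S u) (at_right 0)" using S by (intro order_tendstoD(1)) auto
  then have "eventually (\<lambda>u. LS / 2 * a \<le> R u) (at_right 0)" using eq bounds
  proof eventually_elim
    case (elim u)
    have "LS / 2 * a \<le> S u * a" using elim \<open>0 < a\<close> by (intro mult_right_mono) auto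
    also have "\<dots> \<le> S u * q u" using elim \<open>0 < LS\<close> by (intro mult_left_mono) auto
    finally show ?case using elim by simp
  qed
  then have "LS / 2 * a \<le> LR" by (rule tendsto_lowerbound[OF R _ trivial_limit_at_right_real])
  then show "0 < LR" using \<open>0 < LS\<close> \<open>0 < a\<close> by (smt (verit) half_gt_zero mult_pos_pos)
next
  assume "0 < LR"
  show "0 < LS"
  proof (rule ccontr)
    assume "\<not> 0 < LS"
    have "eventually (\<lambda>u. R u \<le> max (S u) 0 * b) (at_right 0)" using eq bounds
      by eventually_elim (use \<open>0 < a\<close> in \<open>auto simp: max_def mult_left_mono mult_nonpos_nonneg\<close>)
    then have "LR \<le> max LS 0 * b"
      by (rule tendsto_le[OF trivial_limit_at_right_real tendsto_mult[OF tendsto_max[OF S tendsto_const] tendsto_const] R])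
    then show False using \<open>\<not> 0 < LS\<close> \<open>0 < LR\<close> by simp
  qed
qed

lemma poly_det:
  fixes A :: "real poly^'n^'n"
  shows "poly (det A) u = det (\<chi> i j. poly (A$i$j) u)"
  unfolding det_def by (simp add: poly_sum poly_prod)

lemma rational_on_cramer:
  fixes A :: "real poly^'n^'n"
  assumes "\<And>u. u \<in> S \<Longrightarrow> det (\<chi> i j. poly (A$i$j) u) \<noteq> 0"
    and "\<And>u. u \<in> S \<Longrightarrow> (\<chi> i j. poly (A$i$j) u) *v v u = b"
  shows "rational_on S (\<lambda>u. v u $ k)"
proof -
  define N where "N = det (\<chi> i j. if j = k then [:b$i:] else A$i$j)"
  have "poly (det A) u \<noteq> 0 \<and> v u $ k = poly N u / poly (det A) u" if "u \<in> S" for u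
  proof -
    let ?M = "\<chi> i j. poly (A$i$j) u"
    have "poly N u = det (\<chi> i j. if j = k then b$i else ?M$i$j)"
      unfolding N_def poly_det by (rule arg_cong[where f=det]) (simp add: vec_eq_iff)
    also have "\<dots> = v u $ k * det ?M"
      using cramer_lemma[where A="?M" and k=k and x="v u"] unfolding assms(2)[OF that] .
    finally show ?thesis using assms(1)[OF that] by (simp add: poly_det)
  qed
  then show ?thesis unfolding rational_on_def by blast
qed

section \<open>The evolutionary Markov chain\<close>

lemma sum_prod_mem_eq_prod_add:
  fixes f :: "'a::finite \<Rightarrow> bool \<Rightarrow> real"
  shows "(\<Sum>y\<in>UNIV. \<Prod>g\<in>UNIV. f g (g \<in> y)) = (\<Prod>g\<in>UNIV. f g True + f g False)"
proof -
  have "(\<Prod>g\<in>UNIV. f g True + f g False) =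
        (\<Sum>X\<in>Pow UNIV. (\<Prod>g\<in>X. f g True) * (\<Prod>g\<in>UNIV - X. f g False))"
    by (rule prod_add) simp
  also have "\<dots> = (\<Sum>y\<in>UNIV. \<Prod>g\<in>UNIV. f g (g \<in> y))"
  proof (rule sum.cong)
    fix X :: "'a set"
    have "(\<Prod>g\<in>UNIV. f g (g \<in> X)) = (\<Prod>g\<in>UNIV - X. f g (g \<in> X)) * (\<Prod>g\<in>X. f g (g \<in> X))"
      by (rule prod.subset_diff) auto
    then show "(\<Prod>g\<in>X. f g True) * (\<Prod>g\<in>UNIV - X. f g False) = (\<Prod>g\<in>UNIV. f g (g \<in> X))"
      by (simp add: mult.commute)
  qed simp
  finally show ?thesis by simp
qed

lemma finite_events: "finite (events :: ('g::finite) event set)"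
  by (rule finite_subset[OF subset_UNIV]) simp

definition replace_state :: "'g event \<Rightarrow> 'g set \<Rightarrow> 'g set" where
  "replace_state e x = {h. snd e h \<in> x}"

primrec replace_states :: "'g event list \<Rightarrow> 'g set \<Rightarrow> 'g set" where
  "replace_states [] x = x"
| "replace_states (e # es) x = replace_states es (replace_state e x)"

lemma replace_states_eq: "replace_states es x = {h. foldr (\<circ>) (map snd es) id h \<in> x}"
  by (induction es arbitrary: x) (auto simp: replace_state_def)

lemma replace_state_empty [simp]: "replace_state e {} = {}"
  and replace_state_UNIV [simp]: "replace_state e UNIV = UNIV"
  by (auto simp: replace_state_def)

definition polymorphic :: "'g set set" where
  "polymorphic = UNIV - {{}, UNIV}"

lemma sum_split_monomorphic:
  fixes f :: "('g::finite) set \<Rightarrow> real"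
  shows "(\<Sum>y\<in>UNIV. f y) = f {} + f UNIV + (\<Sum>y\<in>polymorphic. f y)"
proof -
  have U: "(UNIV :: 'g set set) = insert {} (insert UNIV polymorphic)" by (auto simp: polymorphic_def)
  have "({} :: 'g set) \<noteq> UNIV" by auto
  then show ?thesis unfolding U by (simp add: polymorphic_def)
qed

definition flip_site :: "'g \<Rightarrow> 'g set \<Rightarrow> 'g set" where
  "flip_site g x = (if g \<in> x then x - {g} else insert g x)"

lemma mem_flip_site: "k \<in> flip_site g x \<longleftrightarrow> (if k = g then k \<notin> x else k \<in> x)"
  by (auto simp: flip_site_def)

lemma flip_site_neq: "flip_site g x \<noteq> x"
  by (auto simp: flip_site_def)

lemma sum_flip_site_eq:
  fixes x :: "'a::finite set"
  assumes "(g \<in> y) \<noteq> (g \<in> x)"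
  shows "(\<Sum>h\<in>UNIV. if y = flip_site h x \<and> h \<in> R then c h else 0)
    = (if y = flip_site g x \<and> g \<in> R then c g else (0::real))"
proof -
  have "y \<noteq> flip_site h x" if "h \<noteq> g" for h
    using assms that by (auto simp: mem_flip_site)
  then have "(\<Sum>h\<in>UNIV. if y = flip_site h x \<and> h \<in> R then c h else 0)
      = (\<Sum>h\<in>UNIV. if h = g then (if y = flip_site g x \<and> g \<in> R then c g else 0) else 0)"
    by (intro sum.cong) auto
  then show ?thesis by simp
qed

locale replacement_model =
  fixes p :: "('g::finite) set \<Rightarrow> 'g event \<Rightarrow> real" and \<nu> :: real
  assumes replacement_rule: "replacement_rule p" and \<nu>_pos: "0 < \<nu>" and \<nu>_less_1: "\<nu> < 1"
begin

abbreviation T :: "real \<Rightarrow> 'g set \<Rightarrow> 'g set \<Rightarrow> real" where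
  "T u x y \<equiv> trans p \<nu> u x y"

abbreviation T_pow :: "real \<Rightarrow> nat \<Rightarrow> 'g set \<Rightarrow> 'g set \<Rightarrow> real" where
  "T_pow u t x y \<equiv> trans_pow p \<nu> u t x y"

lemma p_nonneg: "0 \<le> p x e"
  using replacement_rule unfolding replacement_rule_def by (cases e) auto

lemma sum_p_events: "(\<Sum>e\<in>events. p x e) = 1"
  using replacement_rule by (simp add: replacement_rule_def)

lemma event_fixes_outside: "e \<in> events \<Longrightarrow> h \<notin> fst e \<Longrightarrow> snd e h = h"
  by (auto simp: events_def)

definition site_prob :: "real \<Rightarrow> 'g event \<Rightarrow> 'g set \<Rightarrow> 'g \<Rightarrow> bool \<Rightarrow> real" where
  "site_prob u e x g b =
     (if g \<in> fst e then (1 - u) * (if (snd e g \<in> x) = b then 1 else 0) + (if b then u * \<nu> else u * (1 - \<nu>))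
      else (if (g \<in> x) = b then 1 else 0))"

lemma trans_eq_site_prob: "T u x y = (\<Sum>e\<in>events. p x e * (\<Prod>g\<in>UNIV. site_prob u e x g (g \<in> y)))"
  by (simp add: trans_def site_factor_def site_prob_def)

lemma site_prob_True_add_False: "site_prob u e x g True + site_prob u e x g False = 1"
  by (simp add: site_prob_def algebra_simps)

lemma site_prob_nonneg: "0 \<le> u \<Longrightarrow> u \<le> 1 \<Longrightarrow> 0 \<le> site_prob u e x g b"
  using \<nu>_pos \<nu>_less_1 by (auto simp: site_prob_def intro!: add_nonneg_nonneg mult_nonneg_nonneg)

lemma site_prob_le_1: "0 \<le> u \<Longrightarrow> u \<le> 1 \<Longrightarrow> site_prob u e x g b \<le> 1"
  using site_prob_True_add_False[of u e x g] site_prob_nonneg[of u e x g "\<not> b"] by (cases b) auto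

lemma site_prob_0: "e \<in> events \<Longrightarrow> site_prob 0 e x g b = (if (snd e g \<in> x) = b then 1 else 0)"
  by (auto simp: site_prob_def event_fixes_outside)

lemma trans_nonneg: "0 \<le> u \<Longrightarrow> u \<le> 1 \<Longrightarrow> 0 \<le> T u x y"
  unfolding trans_eq_site_prob
  by (intro sum_nonneg mult_nonneg_nonneg p_nonneg prod_nonneg site_prob_nonneg) auto

lemma sum_trans: "(\<Sum>y\<in>UNIV. T u x y) = 1"
proof -
  have "(\<Sum>y\<in>UNIV. T u x y) = (\<Sum>e\<in>events. p x e * (\<Sum>y\<in>UNIV. \<Prod>g\<in>UNIV. site_prob u e x g (g \<in> y)))"
    unfolding trans_eq_site_prob sum_distrib_left by (rule sum.swap)
  then show ?thesis by (simp add: sum_prod_mem_eq_prod_add site_prob_True_add_False sum_p_events)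
qed

lemma stochastic_trans: "0 \<le> u \<Longrightarrow> u \<le> 1 \<Longrightarrow> stochastic (T u)"
  by (simp add: stochastic_def trans_nonneg sum_trans)

text \<open>Summing the transition probabilities over all \<open>y \<ni> g\<close> leaves only the factor of
  site \<open>g\<close>, since the factors of the other sites sum to one.\<close>

lemma trans_marginal:
  "(\<Sum>y\<in>UNIV. T u x y * (if g \<in> y then 1 else 0)) = (\<Sum>e\<in>events. p x e * site_prob u e x g True)"
proof -
  define f where "f e k b = (if k = g \<and> \<not> b then 0 else site_prob u e x k b)" for e k b
  have prod_f: "(\<Prod>k\<in>UNIV. site_prob u e x k (k \<in> y)) * (if g \<in> y then 1 else 0)
      = (\<Prod>k\<in>UNIV. f e k (k \<in> y))" for e y
  proof (cases "g \<in> y")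
    case True
    then show ?thesis by (auto simp: f_def intro!: prod.cong)
  next
    case False
    then have "(\<Prod>k\<in>UNIV. f e k (k \<in> y)) = 0" by (intro prod_zero) (auto simp: f_def)
    then show ?thesis using False by simp
  qed
  have sum_f: "(\<Sum>y\<in>UNIV. \<Prod>k\<in>UNIV. f e k (k \<in> y)) = site_prob u e x g True" for e
  proof -
    have "(\<Sum>y\<in>UNIV. \<Prod>k\<in>UNIV. f e k (k \<in> y)) = (\<Prod>k\<in>UNIV. if k = g then site_prob u e x g True else 1)"
      unfolding sum_prod_mem_eq_prod_add by (intro prod.cong) (auto simp: f_def site_prob_True_add_False)
    then show ?thesis by simp
  qed
  have "(\<Sum>y\<in>UNIV. T u x y * (if g \<in> y then 1 else 0))
      = (\<Sum>y\<in>UNIV. \<Sum>e\<in>events. p x e * (\<Prod>k\<in>UNIV. f e k (k \<in> y)))"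
    unfolding trans_eq_site_prob sum_distrib_right by (simp only: mult.assoc prod_f)
  also have "\<dots> = (\<Sum>e\<in>events. p x e * (\<Sum>y\<in>UNIV. \<Prod>k\<in>UNIV. f e k (k \<in> y)))"
    unfolding sum_distrib_left by (rule sum.swap)
  finally show ?thesis by (simp only: sum_f)
qed

lemma e_rate_nonneg: "0 \<le> e_rate p h g x"
  unfolding e_rate_def by (rule sum_nonneg) (auto intro: p_nonneg)

lemma sum_e_rate_mult:
  "(\<Sum>h\<in>UNIV. e_rate p h g x * \<phi> h) = (\<Sum>e\<in>events. p x e * (if g \<in> fst e then \<phi> (snd e g) else 0))"
proof -
  have e_rate: "e_rate p h g x = (\<Sum>e\<in>events. if g \<in> fst e \<and> snd e g = h then p x e else 0)" for h
  proof -
    have "{(R, \<alpha>). (R, \<alpha>) \<in> events \<and> g \<in> R \<and> \<alpha> g = h} = {e \<in> events. g \<in> fst e \<and> snd e g = h}"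
      by auto
    then show ?thesis unfolding e_rate_def by (simp add: sum.inter_filter[OF finite_events])
  qed
  have "(\<Sum>h\<in>UNIV. e_rate p h g x * \<phi> h)
      = (\<Sum>e\<in>events. \<Sum>h\<in>UNIV. if g \<in> fst e \<and> snd e g = h then p x e * \<phi> h else 0)"
    unfolding e_rate sum_distrib_right by (subst sum.swap) (auto intro!: sum.cong)
  also have "\<dots> = (\<Sum>e\<in>events. p x e * (if g \<in> fst e then \<phi> (snd e g) else 0))"
    by (intro sum.cong) auto
  finally show ?thesis .
qed

lemma d_rate_eq_sum_events: "d_rate p g x = (\<Sum>e\<in>events. p x e * (if g \<in> fst e then 1 else 0))"
  using sum_e_rate_mult[of g x "\<lambda>_. 1"] by (simp add: d_rate_def)

lemma trans_marginal_rates: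
  "(\<Sum>y\<in>UNIV. T u x y * (if g \<in> y then 1 else 0)) =
     (1 - u) * (\<Sum>h\<in>UNIV. e_rate p h g x * (if h \<in> x then 1 else 0)) + u * \<nu> * d_rate p g x
     + (if g \<in> x then 1 else 0) * (1 - d_rate p g x)"
proof -
  have "p x e * site_prob u e x g True =
     (1 - u) * (p x e * (if g \<in> fst e then (if snd e g \<in> x then 1 else 0) else 0))
     + u * \<nu> * (p x e * (if g \<in> fst e then 1 else 0))
     + (if g \<in> x then 1 else 0) * (p x e - p x e * (if g \<in> fst e then 1 else 0))" for e
    by (simp add: site_prob_def algebra_simps)
  then show ?thesis
    unfolding trans_marginal
    by (simp add: sum.distrib sum_subtractf sum_distrib_left right_diff_distrib sum_p_events
        d_rate_eq_sum_events sum_e_rate_mult[of g x "\<lambda>h. if h \<in> x then 1 else 0"])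
qed

text \<open>With weights \<open>w\<close> on the sites, \<open>births w x - deaths w x\<close> is the selection term:
  for \<open>w = 1\<close> it is \<open>\<Delta>\<^sub>s\<^sub>e\<^sub>l\<close>, for the reproductive values it is \<open>\<Delta>\<^sub>s\<^sub>e\<^sub>l\<close> with hats.\<close>

definition births :: "('g \<Rightarrow> real) \<Rightarrow> 'g set \<Rightarrow> real" where
  "births w x = (\<Sum>h\<in>x. \<Sum>g\<in>UNIV. e_rate p h g x * w g)"

definition deaths :: "('g \<Rightarrow> real) \<Rightarrow> 'g set \<Rightarrow> real" where
  "deaths w x = (\<Sum>g\<in>x. w g * d_rate p g x)"

definition total_deaths :: "('g \<Rightarrow> real) \<Rightarrow> 'g set \<Rightarrow> real" where
  "total_deaths w x = (\<Sum>g\<in>UNIV. w g * d_rate p g x)"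

lemma Delta_sel_eq: "Delta_sel p x = births (\<lambda>_. 1) x - deaths (\<lambda>_. 1) x"
  by (simp add: Delta_sel_def births_def deaths_def b_rate_def sum_subtractf)

lemma Delta_sel_hat_eq: "Delta_sel_hat p x = births (repro_values p) x - deaths (repro_values p) x"
  by (simp add: Delta_sel_hat_def births_def deaths_def b_hat_def d_hat_def sum_subtractf)

lemma sum_mem_eq_sum_indicator: "(\<Sum>g\<in>y. w g) = (\<Sum>g\<in>UNIV. w g * (if g \<in> y then 1 else 0))"
  for w :: "'g \<Rightarrow> real"
  by (simp add: of_bool_def[symmetric] Int_def)

lemma expected_weight_change:
  "(\<Sum>y\<in>UNIV. T u x y * (\<Sum>g\<in>y. w g)) - (\<Sum>g\<in>x. w g)
     = (births w x - deaths w x) - u * (births w x - \<nu> * total_deaths w x)"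
proof -
  have "T u x y * (\<Sum>g\<in>y. w g) = (\<Sum>g\<in>UNIV. w g * (T u x y * (if g \<in> y then 1 else 0)))" for y
    by (subst sum_mem_eq_sum_indicator[of w y]) (simp add: sum_distrib_left algebra_simps)
  then have "(\<Sum>y\<in>UNIV. T u x y * (\<Sum>g\<in>y. w g))
      = (\<Sum>g\<in>UNIV. w g * (\<Sum>y\<in>UNIV. T u x y * (if g \<in> y then 1 else 0)))"
    by (simp add: sum_distrib_left) (rule sum.swap)
  moreover have "deaths w x = (\<Sum>g\<in>UNIV. w g * (if g \<in> x then 1 else 0) * d_rate p g x)"
    unfolding deaths_def by (subst sum_mem_eq_sum_indicator) (simp add: algebra_simps)
  moreover have "births w x = (\<Sum>g\<in>UNIV. w g * (\<Sum>h\<in>UNIV. e_rate p h g x * (if h \<in> x then 1 else 0)))"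
    unfolding births_def sum_mem_eq_sum_indicator[of "\<lambda>h. \<Sum>g\<in>UNIV. e_rate p h g x * w g" x]
    unfolding sum_distrib_left sum_distrib_right by (subst sum.swap) (simp add: algebra_simps)
  ultimately show ?thesis
    unfolding trans_marginal_rates total_deaths_def sum_mem_eq_sum_indicator[of w x]
    by (simp add: algebra_simps sum.distrib sum_distrib_left sum_subtractf)
qed

text \<open>At stationarity the expected weighted allele count does not change, so the expected
  selection term is balanced by \<open>u\<close> times the mutational flux.\<close>

lemma stationary_selection_eq:
  assumes "invariant (T u) \<pi>"
  shows "(\<Sum>x\<in>UNIV. \<pi> x * (births w x - deaths w x))
       = u * (\<Sum>x\<in>UNIV. \<pi> x * (births w x - \<nu> * total_deaths w x))"
proof -
  have "(\<Sum>x\<in>UNIV. \<pi> x * ((\<Sum>y\<in>UNIV. T u x y * (\<Sum>g\<in>y. w g)) - (\<Sum>g\<in>x. w g))) = 0"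
    using invariant_sum_expectation[OF assms, of "\<lambda>y. \<Sum>g\<in>y. w g"]
    by (simp add: right_diff_distrib sum_subtractf)
  then show ?thesis
    unfolding expected_weight_change
    by (simp add: right_diff_distrib sum_subtractf sum_distrib_left mult.left_commute)
qed

definition min_bias :: real where
  "min_bias = min \<nu> (1 - \<nu>)"

lemma min_bias_pos: "0 < min_bias" and min_bias_le_1: "min_bias \<le> 1"
  using \<nu>_pos \<nu>_less_1 by (auto simp: min_bias_def)

lemma site_prob_ge_min_bias:
  assumes "e \<in> events" "0 \<le> u" "u \<le> 1" "b = (snd e k \<in> x)"
  shows "min_bias \<le> site_prob u e x k b"
proof (cases "k \<in> fst e")
  case True
  have "u * min_bias \<le> (if b then u * \<nu> else u * (1 - \<nu>))"
    using assms(2) by (auto simp: min_bias_def intro: mult_left_mono)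
  moreover have "0 \<le> (1 - u) * (1 - min_bias)"
    using assms(3) min_bias_le_1 by (intro mult_nonneg_nonneg) auto
  ultimately show ?thesis
    using True assms(4) by (simp add: site_prob_def algebra_simps)
next
  case False
  then show ?thesis
    using event_fixes_outside[OF assms(1) False] assms(4) min_bias_le_1 by (simp add: site_prob_def)
qed

lemma site_prob_ge_mutation:
  assumes "k \<in> fst e" "0 \<le> u" "u \<le> 1"
  shows "u * min_bias \<le> site_prob u e x k b"
proof -
  have "u * min_bias \<le> (if b then u * \<nu> else u * (1 - \<nu>))"
    using assms(2) by (auto simp: min_bias_def intro: mult_left_mono)
  moreover have "0 \<le> (1 - u) * (if (snd e k \<in> x) = b then 1 else 0)" using assms(3) by simp
  moreover have "site_prob u e x k b
      = (1 - u) * (if (snd e k \<in> x) = b then 1 else 0) + (if b then u * \<nu> else u * (1 - \<nu>))"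
    using assms(1) by (simp add: site_prob_def)
  ultimately show ?thesis by linarith
qed

lemma trans_ge_event:
  assumes e: "e \<in> events" and u: "0 \<le> u" "u \<le> 1"
    and bound: "\<And>k. c k \<le> site_prob u e x k (k \<in> y)" "\<And>k. 0 \<le> c k"
  shows "p x e * (\<Prod>k\<in>UNIV. c k) \<le> T u x y"
proof -
  have "p x e * (\<Prod>k\<in>UNIV. c k) \<le> p x e * (\<Prod>k\<in>UNIV. site_prob u e x k (k \<in> y))"
    using bound by (intro mult_left_mono prod_mono p_nonneg) auto
  also have "\<dots> \<le> T u x y" unfolding trans_eq_site_prob
    by (rule member_le_sum[OF e]) (auto intro!: mult_nonneg_nonneg p_nonneg prod_nonneg site_prob_nonneg u)
  finally show ?thesis .
qed

lemma trans_ge_replace_state: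
  assumes "e \<in> events" "0 \<le> u" "u \<le> 1"
  shows "p x e * min_bias ^ CARD('g) \<le> T u x (replace_state e x)"
  using trans_ge_event[OF assms, of "\<lambda>_. min_bias"] site_prob_ge_min_bias[OF assms] min_bias_pos
  by (simp add: replace_state_def)

lemma trans_ge_one_mutation:
  assumes e: "e \<in> events" and u: "0 \<le> u" "u \<le> 1" and g: "g \<in> fst e"
    and y: "\<And>h. h \<noteq> g \<Longrightarrow> h \<in> y \<longleftrightarrow> h \<in> replace_state e x"
  shows "p x e * (min_bias ^ CARD('g) * u) \<le> T u x y"
proof -
  have "p x e * (\<Prod>k\<in>UNIV. min_bias * (if k = g then u else 1)) \<le> T u x y"
  proof (rule trans_ge_event[OF e u])
    fix k
    show "0 \<le> min_bias * (if k = g then u else 1)" using min_bias_pos u by simp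
    show "min_bias * (if k = g then u else 1) \<le> site_prob u e x k (k \<in> y)"
      using site_prob_ge_mutation[OF g u, of x "g \<in> y"] site_prob_ge_min_bias[OF e u, of _ k x] y[of k]
      by (cases "k = g") (auto simp: mult.commute replace_state_def)
  qed
  then show ?thesis by (simp add: prod.distrib)
qed

lemma trans_pow_Suc_left: "T_pow u (Suc t) x y = (\<Sum>z\<in>UNIV. T u x z * T_pow u t z y)"
proof (induction t arbitrary: y)
  case 0
  show ?case by (simp add: of_bool_def[symmetric])
next
  case (Suc t)
  have "T_pow u (Suc (Suc t)) x y = (\<Sum>z\<in>UNIV. (\<Sum>w\<in>UNIV. T u x w * T_pow u t w z) * T u z y)"
    by (simp only: trans_pow.simps(2)[of p \<nu> u "Suc t"] Suc.IH)
  also have "\<dots> = (\<Sum>w\<in>UNIV. T u x w * (\<Sum>z\<in>UNIV. T_pow u t w z * T u z y))"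
    unfolding sum_distrib_right sum_distrib_left by (subst sum.swap) (simp add: mult.assoc)
  finally show ?case by simp
qed

lemma trans_pow_add: "T_pow u (s + t) x y = (\<Sum>z\<in>UNIV. T_pow u s x z * T_pow u t z y)"
proof (induction t arbitrary: y)
  case 0
  show ?case by (simp add: of_bool_def[symmetric])
next
  case (Suc t)
  have "T_pow u (s + Suc t) x y = (\<Sum>w\<in>UNIV. (\<Sum>z\<in>UNIV. T_pow u s x z * T_pow u t z w) * T u w y)"
    by (simp only: add_Suc_right trans_pow.simps Suc.IH)
  also have "\<dots> = (\<Sum>z\<in>UNIV. T_pow u s x z * (\<Sum>w\<in>UNIV. T_pow u t z w * T u w y))"
    unfolding sum_distrib_right sum_distrib_left by (subst sum.swap) (simp add: mult.assoc)
  finally show ?case by simp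
qed

lemma trans_pow_nonneg: "0 \<le> u \<Longrightarrow> u \<le> 1 \<Longrightarrow> 0 \<le> T_pow u t x y"
  by (induction t arbitrary: y) (auto intro!: sum_nonneg mult_nonneg_nonneg trans_nonneg)

lemma sum_trans_pow: "(\<Sum>y\<in>UNIV. T_pow u t x y) = 1"
proof (induction t)
  case (Suc t)
  have "(\<Sum>y\<in>UNIV. T_pow u (Suc t) x y) = (\<Sum>z\<in>UNIV. T_pow u t x z * (\<Sum>y\<in>UNIV. T u z y))"
    unfolding trans_pow.simps sum_distrib_left by (rule sum.swap)
  then show ?case using Suc by (simp add: sum_trans)
qed simp

lemma trans_pow_le_1: "0 \<le> u \<Longrightarrow> u \<le> 1 \<Longrightarrow> T_pow u t x y \<le> 1"
  using member_le_sum[of y UNIV "T_pow u t x"] trans_pow_nonneg by (simp add: sum_trans_pow)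

lemma sum_subset_trans_pow_0_le_1: "(\<Sum>y\<in>Y. T_pow 0 t x y) \<le> 1"
  using sum_mono2[of UNIV Y "T_pow 0 t x"] trans_pow_nonneg[of 0] by (simp add: sum_trans_pow)

lemma trans_pow_replace_states_ge:
  assumes u: "0 \<le> u" "u \<le> 1" and c: "0 \<le> c" and es: "\<forall>e\<in>set es. e \<in> events \<and> (\<forall>x. c \<le> p x e)"
  shows "(c * min_bias ^ CARD('g)) ^ length es \<le> T_pow u (length es) x (replace_states es x)"
  using es
proof (induction es arbitrary: x)
  case (Cons e es)
  let ?z = "replace_state e x"
  have e: "e \<in> events" "c \<le> p x e" using Cons.prems by auto
  have "c * min_bias ^ CARD('g) \<le> p x e * min_bias ^ CARD('g)"
    using e(2) min_bias_pos by (simp add: mult_right_mono)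
  also have "\<dots> \<le> T u x ?z" by (rule trans_ge_replace_state[OF e(1) u])
  finally have step: "c * min_bias ^ CARD('g) \<le> T u x ?z" .
  have "(c * min_bias ^ CARD('g)) * (c * min_bias ^ CARD('g)) ^ length es
      \<le> T u x ?z * T_pow u (length es) ?z (replace_states es ?z)"
    using Cons c min_bias_pos by (intro mult_mono step) (auto intro!: trans_nonneg u)
  also have "\<dots> \<le> (\<Sum>z\<in>UNIV. T u x z * T_pow u (length es) z (replace_states es ?z))"
    by (rule member_le_sum) (auto intro!: mult_nonneg_nonneg trans_nonneg trans_pow_nonneg u)
  finally show ?case by (simp only: length_Cons replace_states.simps trans_pow_Suc_left power_Suc)
qed simp

lemma reachable_replace_states:
  assumes u: "0 \<le> u" "u \<le> 1" and es: "\<forall>e\<in>set es. e \<in> events \<and> (\<forall>x. 0 < p x e)"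
  shows "(x, replace_states es x) \<in> (positive_steps (T u))\<^sup>*"
  using es
proof (induction es arbitrary: x)
  case (Cons e es)
  have e: "e \<in> events" "0 < p x e" using Cons.prems by auto
  have "0 < p x e * min_bias ^ CARD('g)" using e min_bias_pos by simp
  also have "\<dots> \<le> T u x (replace_state e x)" by (rule trans_ge_replace_state[OF e(1) u])
  finally have "(x, replace_state e x) \<in> positive_steps (T u)" by (simp add: positive_steps_def)
  then show ?case using Cons by (auto intro: converse_rtrancl_into_rtrancl)
qed simp

lemma trans_0_eq: "T 0 x y = (\<Sum>e\<in>events. if y = replace_state e x then p x e else 0)"
proof -
  have "(\<Prod>k\<in>UNIV. site_prob 0 e x k (k \<in> y)) = (if y = replace_state e x then 1 else 0)"
    if "e \<in> events" for e
  proof (cases "y = replace_state e x")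
    case False
    then obtain k where "(k \<in> y) \<noteq> (snd e k \<in> x)" by (auto simp: replace_state_def)
    then have "site_prob 0 e x k (k \<in> y) = 0" by (simp add: site_prob_0[OF that])
    then have "(\<Prod>k\<in>UNIV. site_prob 0 e x k (k \<in> y)) = 0" by (intro prod_zero) auto
    then show ?thesis using False by simp
  qed (simp add: site_prob_0[OF that] replace_state_def)
  then show ?thesis unfolding trans_eq_site_prob by (intro sum.cong) auto
qed

lemma trans_0_fixed:
  assumes "\<forall>e\<in>events. replace_state e x = x"
  shows "T 0 x y = (if y = x then 1 else 0)"
proof -
  have "T 0 x y = (\<Sum>e\<in>events. if y = x then p x e else 0)"
    unfolding trans_0_eq using assms by (intro sum.cong) auto
  then show ?thesis by (simp add: sum_p_events)
qed

lemma trans_pow_0_fixed: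
  assumes "\<forall>e\<in>events. replace_state e x = x"
  shows "T_pow 0 t x y = (if y = x then 1 else 0)"
  by (induction t arbitrary: y) (simp_all add: of_bool_def[symmetric] trans_0_fixed[OF assms])

lemma trans_pow_0_absorbed_mono:
  assumes "\<forall>e\<in>events. replace_state e z = z"
  shows "incseq (\<lambda>t. T_pow 0 t x z)"
proof (rule incseq_SucI)
  fix t
  have "T_pow 0 t x z * T 0 z z \<le> (\<Sum>w\<in>UNIV. T_pow 0 t x w * T 0 w z)"
    by (rule member_le_sum) (auto intro!: mult_nonneg_nonneg trans_pow_nonneg trans_nonneg)
  then show "T_pow 0 t x z \<le> T_pow 0 (Suc t) x z" using trans_0_fixed[OF assms] by simp
qed

lemma site_prob_diff_le:
  assumes "0 \<le> u" "u \<le> 1"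
  shows "\<bar>site_prob u e x k b - site_prob 0 e x k b\<bar> \<le> u"
proof -
  define t where "t = (if b then \<nu> else 1 - \<nu>) - (if (snd e k \<in> x) = b then 1 else 0)"
  have "\<bar>t\<bar> \<le> 1" using \<nu>_pos \<nu>_less_1 by (auto simp: t_def)
  then have "\<bar>u * t\<bar> \<le> u" using assms by (simp add: abs_mult mult_left_le)
  moreover have "site_prob u e x k b - site_prob 0 e x k b = (if k \<in> fst e then u * t else 0)"
    by (simp add: site_prob_def t_def algebra_simps)
  ultimately show ?thesis using assms by auto
qed

lemma trans_diff_le:
  assumes u: "0 \<le> u" "u \<le> 1"
  shows "\<bar>T u x y - T 0 x y\<bar> \<le> real CARD('g) * u"
proof -
  let ?d = "\<lambda>u e. \<Prod>k\<in>UNIV. site_prob u e x k (k \<in> y)"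
  have prod_diff: "\<bar>p x e * (?d u e - ?d 0 e)\<bar> \<le> p x e * (real CARD('g) * u)" for e
  proof -
    have "\<bar>?d u e - ?d 0 e\<bar> \<le> (\<Sum>k\<in>UNIV. \<bar>site_prob u e x k (k \<in> y) - site_prob 0 e x k (k \<in> y)\<bar>)"
      using norm_prod_diff[of UNIV "\<lambda>k. site_prob u e x k (k \<in> y)" "\<lambda>k. site_prob 0 e x k (k \<in> y)"]
        site_prob_nonneg site_prob_le_1 u by simp
    also have "\<dots> \<le> (\<Sum>k\<in>(UNIV :: 'g set). u)"
      by (intro sum_mono site_prob_diff_le[OF u])
    finally show ?thesis using p_nonneg[of x e] by (simp add: abs_mult mult_left_mono)
  qed
  have "\<bar>T u x y - T 0 x y\<bar> = \<bar>\<Sum>e\<in>events. p x e * (?d u e - ?d 0 e)\<bar>"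
    unfolding trans_eq_site_prob by (simp add: sum_subtractf right_diff_distrib)
  also have "\<dots> \<le> (\<Sum>e\<in>events. \<bar>p x e * (?d u e - ?d 0 e)\<bar>)" by (rule sum_abs)
  also have "\<dots> \<le> (\<Sum>e\<in>events. p x e * (real CARD('g) * u))" by (intro sum_mono prod_diff)
  also have "\<dots> = real CARD('g) * u" by (simp add: sum_distrib_right[symmetric] sum_p_events)
  finally show ?thesis .
qed

lemma sum_trans_diff_le:
  assumes u: "0 \<le> u" "u \<le> 1" and f: "\<And>y. 0 \<le> f y" "\<And>y. f y \<le> M"
  shows "\<bar>\<Sum>y\<in>UNIV. (T u x y - T 0 x y) * f y\<bar> \<le> real CARD('g set) * real CARD('g) * u * M"
proof -
  have "\<bar>\<Sum>y\<in>UNIV. (T u x y - T 0 x y) * f y\<bar> \<le> (\<Sum>y\<in>UNIV. \<bar>(T u x y - T 0 x y) * f y\<bar>)"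
    by (rule sum_abs)
  also have "\<dots> = (\<Sum>y\<in>UNIV. \<bar>T u x y - T 0 x y\<bar> * f y)"
    using f(1) by (simp add: abs_mult)
  also have "\<dots> \<le> (\<Sum>y\<in>(UNIV :: 'g set set). real CARD('g) * u * M)"
    using trans_diff_le[OF u] f u by (intro sum_mono mult_mono) auto
  finally show ?thesis by simp
qed

definition site_poly :: "'g event \<Rightarrow> 'g set \<Rightarrow> 'g set \<Rightarrow> 'g \<Rightarrow> real poly" where
  "site_poly e x y g = (if g \<in> fst e
     then [: (if (snd e g \<in> x) = (g \<in> y) then 1 else 0),
             (if g \<in> y then \<nu> else 1 - \<nu>) - (if (snd e g \<in> x) = (g \<in> y) then 1 else 0) :]
     else [: (if (g \<in> x) = (g \<in> y) then 1 else 0) :])"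

lemma poly_site_poly: "poly (site_poly e x y g) u = site_prob u e x g (g \<in> y)"
  by (simp add: site_poly_def site_prob_def algebra_simps)

definition trans_poly :: "'g set \<Rightarrow> 'g set \<Rightarrow> real poly" where
  "trans_poly x y = (\<Sum>e\<in>events. [:p x e:] * (\<Prod>g\<in>UNIV. site_poly e x y g))"

lemma poly_trans_poly: "poly (trans_poly x y) u = T u x y"
  by (simp add: trans_poly_def trans_eq_site_prob poly_sum poly_prod poly_site_poly)

lemma site_prob_tendsto: "((\<lambda>u. site_prob u e x k (k \<in> y)) \<longlongrightarrow> site_prob 0 e x k (k \<in> y)) (at_right 0)"
  unfolding poly_site_poly[symmetric] by (intro tendsto_intros)

definition mutant_prob :: "'g set \<Rightarrow> 'g \<Rightarrow> real" where
  "mutant_prob x g = (if g \<in> x then 1 - \<nu> else \<nu>)"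

lemma prod_site_prob_0_fixed:
  assumes e: "e \<in> events" and fixed: "replace_state e x0 = x0" and g: "(g \<in> y) \<noteq> (g \<in> x0)"
  shows "(\<Prod>k\<in>UNIV - {g}. site_prob 0 e x0 k (k \<in> y)) = (if y = flip_site g x0 then 1 else 0)"
proof -
  have parent: "(snd e k \<in> x0) = (k \<in> x0)" for k using fixed by (auto simp: replace_state_def)
  show ?thesis
  proof (cases "y = flip_site g x0")
    case True
    then show ?thesis by (auto simp: site_prob_0[OF e] parent mem_flip_site intro!: prod.neutral)
  next
    case False
    then obtain k where k: "k \<noteq> g" "(k \<in> y) \<noteq> (k \<in> x0)"
      using g by (auto simp: set_eq_iff mem_flip_site split: if_splits)
    then have "site_prob 0 e x0 k (k \<in> y) = 0" by (simp add: site_prob_0[OF e] parent)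
    then have "(\<Prod>k\<in>UNIV - {g}. site_prob 0 e x0 k (k \<in> y)) = 0" using k(1) by (intro prod_zero) auto
    then show ?thesis using False by simp
  qed
qed

text \<open>If the event \<open>e\<close> leaves \<open>x\<^sub>0\<close> unchanged, reaching \<open>y \<noteq> x\<^sub>0\<close> needs a mutation at every
  site where they differ, so the probability is \<open>O(u)\<close>, and its first-order term is
  nonzero only for the single-site flips of \<open>x\<^sub>0\<close>.\<close>

lemma event_first_order_tendsto:
  assumes e: "e \<in> events" and fixed: "replace_state e x0 = x0" and y: "y \<noteq> x0"
  shows "((\<lambda>u. (\<Prod>k\<in>UNIV. site_prob u e x0 k (k \<in> y)) / u) \<longlongrightarrow>
           (\<Sum>g\<in>UNIV. if y = flip_site g x0 \<and> g \<in> fst e then mutant_prob x0 g else 0)) (at_right 0)"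
proof -
  obtain g where g: "(g \<in> y) \<noteq> (g \<in> x0)" using y by blast
  define K where "K = (if g \<in> fst e then mutant_prob x0 g else 0)"
  have site_g: "site_prob u e x0 g (g \<in> y) = u * K" for u
    using g fixed by (auto simp: site_prob_def mutant_prob_def K_def replace_state_def)
  have limit: "(\<Sum>h\<in>UNIV. if y = flip_site h x0 \<and> h \<in> fst e then mutant_prob x0 h else 0)
      = K * (\<Prod>k\<in>UNIV - {g}. site_prob 0 e x0 k (k \<in> y))"
    by (simp add: sum_flip_site_eq[OF g] prod_site_prob_0_fixed[OF e fixed g] K_def)
  have "eventually (\<lambda>u. K * (\<Prod>k\<in>UNIV - {g}. site_prob u e x0 k (k \<in> y))
      = (\<Prod>k\<in>UNIV. site_prob u e x0 k (k \<in> y)) / u) (at_right 0)"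
    using eventually_at_right_less[of "0::real"]
    by eventually_elim (simp add: prod.remove[of UNIV g] site_g)
  moreover have "((\<lambda>u. K * (\<Prod>k\<in>UNIV - {g}. site_prob u e x0 k (k \<in> y)))
      \<longlongrightarrow> K * (\<Prod>k\<in>UNIV - {g}. site_prob 0 e x0 k (k \<in> y))) (at_right 0)"
    by (intro tendsto_intros site_prob_tendsto)
  ultimately show ?thesis unfolding limit by (rule Lim_transform_eventually[rotated])
qed

lemma sum_events_sum_fst: "(\<Sum>e\<in>events. p x e * (\<Sum>g\<in>fst e. f g)) = (\<Sum>g\<in>UNIV. d_rate p g x * f g)"
proof -
  have "(\<Sum>e\<in>events. p x e * (\<Sum>g\<in>fst e. f g))
      = (\<Sum>e\<in>events. \<Sum>g\<in>UNIV. f g * (p x e * (if g \<in> fst e then 1 else 0)))"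
    by (intro sum.cong refl) (simp add: sum_mem_eq_sum_indicator[of _ "fst _"] sum_distrib_left algebra_simps)
  also have "\<dots> = (\<Sum>g\<in>UNIV. f g * (\<Sum>e\<in>events. p x e * (if g \<in> fst e then 1 else 0)))"
    by (subst sum.swap) (simp add: sum_distrib_left)
  finally show ?thesis by (simp add: d_rate_eq_sum_events mult.commute)
qed

lemma trans_first_order_tendsto:
  assumes fixed: "\<forall>e\<in>events. replace_state e x0 = x0" and "\<phi> x0 = 0"
  shows "((\<lambda>u. (\<Sum>y\<in>UNIV. T u x0 y * \<phi> y) / u) \<longlongrightarrow>
          (\<Sum>g\<in>UNIV. d_rate p g x0 * (mutant_prob x0 g * \<phi> (flip_site g x0)))) (at_right 0)"
proof -
  define c where "c e y = (\<Sum>g\<in>UNIV. if y = flip_site g x0 \<and> g \<in> fst e then mutant_prob x0 g else 0)"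
    for e :: "'g event" and y
  let ?Y = "UNIV - {x0}"
  have inner: "(\<Sum>y\<in>?Y. c e y * \<phi> y) = (\<Sum>g\<in>fst e. mutant_prob x0 g * \<phi> (flip_site g x0))" for e
  proof -
    have "(\<Sum>y\<in>?Y. c e y * \<phi> y)
        = (\<Sum>g\<in>UNIV. \<Sum>y\<in>?Y. if y = flip_site g x0 then (if g \<in> fst e then mutant_prob x0 g * \<phi> y else 0) else 0)"
      unfolding c_def sum_distrib_right by (subst sum.swap) (intro sum.cong refl, auto)
    also have "\<dots> = (\<Sum>g\<in>UNIV. if g \<in> fst e then mutant_prob x0 g * \<phi> (flip_site g x0) else 0)"
      by (intro sum.cong refl) (simp add: sum.delta flip_site_neq)
    finally show ?thesis by (simp add: sum.If_cases)
  qed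
  have "(\<Sum>y\<in>UNIV. T u x0 y * \<phi> y) / u
      = (\<Sum>y\<in>?Y. \<Sum>e\<in>events. p x0 e * ((\<Prod>k\<in>UNIV. site_prob u e x0 k (k \<in> y)) / u) * \<phi> y)" for u
    using \<open>\<phi> x0 = 0\<close>
    by (simp add: sum.remove[of UNIV x0] sum_divide_distrib trans_eq_site_prob sum_distrib_right)
  moreover have "((\<lambda>u. \<Sum>y\<in>?Y. \<Sum>e\<in>events. p x0 e * ((\<Prod>k\<in>UNIV. site_prob u e x0 k (k \<in> y)) / u) * \<phi> y)
      \<longlongrightarrow> (\<Sum>y\<in>?Y. \<Sum>e\<in>events. p x0 e * c e y * \<phi> y)) (at_right 0)"
    unfolding c_def by (intro tendsto_intros event_first_order_tendsto) (use fixed in auto)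
  moreover have "(\<Sum>y\<in>?Y. \<Sum>e\<in>events. p x0 e * c e y * \<phi> y)
      = (\<Sum>g\<in>UNIV. d_rate p g x0 * (mutant_prob x0 g * \<phi> (flip_site g x0)))"
  proof -
    have "(\<Sum>y\<in>?Y. \<Sum>e\<in>events. p x0 e * c e y * \<phi> y) = (\<Sum>e\<in>events. p x0 e * (\<Sum>y\<in>?Y. c e y * \<phi> y))"
      by (subst sum.swap) (simp add: sum_distrib_left mult.assoc)
    also have "\<dots> = (\<Sum>g\<in>UNIV. d_rate p g x0 * (mutant_prob x0 g * \<phi> (flip_site g x0)))"
      unfolding inner by (rule sum_events_sum_fst)
    finally show ?thesis .
  qed
  ultimately show ?thesis by simp
qed

end

section \<open>Fixation and the low-mutation limit\<close>

lemma less_iff_of_balance: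
  fixes q \<nu> A a :: real
  assumes "0 < \<nu>" "\<nu> < 1" "0 \<le> q" "q \<le> 1" "0 < A" "0 < a"
    and balance: "(1 - q) * \<nu> * A = q * (1 - \<nu>) * a"
  shows "\<nu> < q \<longleftrightarrow> a < A"
proof
  assume "\<nu> < q"
  show "a < A"
  proof (rule ccontr)
    assume "\<not> a < A"
    then have "(1 - q) * \<nu> * A \<le> (1 - q) * \<nu> * a" using assms by (intro mult_left_mono) auto
    then have "q * (1 - \<nu>) * a \<le> (1 - q) * \<nu> * a" using balance by simp
    then have "q * (1 - \<nu>) \<le> (1 - q) * \<nu>" using assms(6) by simp
    then show False using \<open>\<nu> < q\<close> by (simp add: algebra_simps)
  qed
next
  assume "a < A"
  show "\<nu> < q"
  proof (rule ccontr)
    assume "\<not> \<nu> < q"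
    have "q * (1 - \<nu>) * a \<le> q * (1 - \<nu>) * A" using assms \<open>a < A\<close> by (intro mult_left_mono) auto
    then have "(1 - q) * \<nu> * A \<le> q * (1 - \<nu>) * A" using balance by simp
    then have "(1 - q) * \<nu> \<le> q * (1 - \<nu>)" using assms(5) by simp
    then have "q = \<nu>" using \<open>\<not> \<nu> < q\<close> by (simp add: algebra_simps)
    then have "(1 - \<nu>) * \<nu> * A = (1 - \<nu>) * \<nu> * a" using balance by (simp add: algebra_simps)
    then show False using assms(1,2) \<open>a < A\<close> by simp
  qed
qed

locale fixation_model = replacement_model p \<nu> for p :: "('g::finite) set \<Rightarrow> 'g event \<Rightarrow> real" and \<nu> +
  fixes g0 :: 'g and es :: "'g event list"
  assumes fixation_events: "\<forall>e\<in>set es. e \<in> events \<and> (\<forall>x. 0 < p x e)"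
    and fixation_replaces_g0: "\<exists>e\<in>set es. g0 \<in> fst e"
    and fixation_lineage: "\<forall>h. foldr (\<circ>) (map snd es) id h = g0"
    and monomorphic_rule_eq: "assumption1 p"
begin

lemma replace_states_fixation: "replace_states es x = (if g0 \<in> x then UNIV else {})"
  by (auto simp: replace_states_eq fixation_lineage)

definition min_rate :: real where
  "min_rate = Min ((\<lambda>(x, e). p x e) ` (UNIV \<times> set es))"

lemma min_rate_pos: "0 < min_rate"
proof -
  have "es \<noteq> []" using fixation_replaces_g0 by auto
  then show ?thesis unfolding min_rate_def using fixation_events by (subst Min_gr_iff) auto
qed

lemma min_rate_le: "e \<in> set es \<Longrightarrow> min_rate \<le> p x e"
  unfolding min_rate_def by (rule Min_le) auto

definition fixation_bound :: real where
  "fixation_bound = (min_rate * min_bias ^ CARD('g)) ^ length es"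

lemma fixation_bound_pos: "0 < fixation_bound"
  using min_rate_pos min_bias_pos by (simp add: fixation_bound_def)

lemma trans_pow_fixation_ge:
  assumes "0 \<le> u" "u \<le> 1"
  shows "fixation_bound \<le> T_pow u (length es) x (if g0 \<in> x then UNIV else {})"
  using trans_pow_replace_states_ge[OF assms, of min_rate es x] min_rate_pos fixation_events min_rate_le
  by (simp add: fixation_bound_def replace_states_fixation less_imp_le)

lemma fixation_bound_le_1: "fixation_bound \<le> 1"
  using trans_pow_fixation_ge[of 0 "{}"] trans_pow_le_1[of 0] by (simp add: order.trans)

lemma site_replaced_in_fixation: "\<exists>e\<in>set es. h \<in> fst e"
proof (rule ccontr)
  assume "\<not> (\<exists>e\<in>set es. h \<in> fst e)"
  then have "\<forall>e\<in>set es. e \<in> events \<and> h \<notin> fst e" using fixation_events by auto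
  then have "foldr (\<circ>) (map snd es) id h = h"
    by (induction es) (auto simp: events_def)
  then show False using fixation_lineage fixation_replaces_g0 \<open>\<not> (\<exists>e\<in>set es. h \<in> fst e)\<close> by metis
qed

lemma d_rate_pos: "0 < d_rate p h x"
proof -
  obtain e where e: "e \<in> set es" "h \<in> fst e" using site_replaced_in_fixation by blast
  then have "e \<in> events" "0 < p x e" using fixation_events by auto
  moreover have "p x e * (if h \<in> fst e then 1 else 0) \<le> (\<Sum>e\<in>events. p x e * (if h \<in> fst e then 1 else 0))"
    by (rule member_le_sum[OF \<open>e \<in> events\<close>]) (auto intro: p_nonneg finite_events)
  ultimately show ?thesis using e by (simp add: d_rate_eq_sum_events)
qed

lemma d_rate_neq_0: "d_rate p g x \<noteq> 0"
  using d_rate_pos[of g x] by simp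

lemma d_rate_nonneg: "0 \<le> d_rate p h x"
  using d_rate_pos less_imp_le by blast

text \<open>For \<open>u > 0\<close> the all-\<open>A\<close> state is reachable from everywhere: first create an \<open>A\<close> at
  \<open>g\<^sub>0\<close> by mutation if needed, then let the events of the fixation axiom spread it.\<close>

lemma reachable_UNIV:
  assumes u: "0 < u" "u \<le> 1"
  shows "(x, UNIV) \<in> (positive_steps (T u))\<^sup>*"
proof -
  have u': "0 \<le> u" "u \<le> 1" using u by auto
  have "(x, replace_states es x) \<in> (positive_steps (T u))\<^sup>*"
    by (rule reachable_replace_states[OF u' fixation_events])
  moreover have "({}, UNIV) \<in> (positive_steps (T u))\<^sup>*"
  proof -
    obtain e where e: "e \<in> set es" "g0 \<in> fst e" using fixation_replaces_g0 by blast
    then have "e \<in> events" "0 < p {} e" using fixation_events by auto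
    then have "0 < p {} e * (min_bias ^ CARD('g) * u)" using u min_bias_pos by simp
    also have "\<dots> \<le> T u {} {g0}"
      by (rule trans_ge_one_mutation[OF \<open>e \<in> events\<close> u' e(2)]) auto
    finally have "({}, {g0}) \<in> positive_steps (T u)" by (simp add: positive_steps_def)
    moreover have "({g0}, UNIV) \<in> (positive_steps (T u))\<^sup>*"
      using reachable_replace_states[OF u' fixation_events, of "{g0}"] by (simp add: replace_states_fixation)
    ultimately show ?thesis by (rule converse_rtrancl_into_rtrancl)
  qed
  ultimately show ?thesis by (auto simp: replace_states_fixation split: if_splits)
qed

lemma pi_MSS0_stationary:
  assumes "0 < u" "u \<le> 1"
  shows "prob_vector (pi_MSS0 p \<nu> u)" and "invariant (T u) (pi_MSS0 p \<nu> u)"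
proof -
  have "stationary p \<nu> u = (\<lambda>\<pi>. prob_vector \<pi> \<and> invariant (T u) \<pi>)"
    by (simp add: fun_eq_iff stationary_def prob_vector_def invariant_def)
  moreover have "\<exists>!\<pi>. prob_vector \<pi> \<and> invariant (T u) \<pi>"
    using assms by (intro stationary_unique[OF stochastic_trans allI[OF reachable_UNIV[OF assms]]]) auto
  ultimately have "prob_vector (pi_MSS0 p \<nu> u) \<and> invariant (T u) (pi_MSS0 p \<nu> u)"
    unfolding pi_MSS0_def by (metis (mono_tags, lifting) theI')
  then show "prob_vector (pi_MSS0 p \<nu> u)" "invariant (T u) (pi_MSS0 p \<nu> u)" by auto
qed

lemma pi_MSS0_nonneg: "0 < u \<Longrightarrow> u \<le> 1 \<Longrightarrow> 0 \<le> pi_MSS0 p \<nu> u x"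
  using pi_MSS0_stationary(1) by (simp add: prob_vector_def)

lemma sum_pi_MSS0: "0 < u \<Longrightarrow> u \<le> 1 \<Longrightarrow> (\<Sum>x\<in>UNIV. pi_MSS0 p \<nu> u x) = 1"
  using pi_MSS0_stationary(1) by (simp add: prob_vector_def)

lemma sum_subset_pi_MSS0_le_1: "0 < u \<Longrightarrow> u \<le> 1 \<Longrightarrow> (\<Sum>x\<in>X. pi_MSS0 p \<nu> u x) \<le> 1"
  using sum_mono2[of UNIV X "pi_MSS0 p \<nu> u"] pi_MSS0_nonneg sum_pi_MSS0 by simp

text \<open>The stationary distribution solves a linear system with polynomial coefficients:
  the equation at \<open>UNIV\<close>, redundant for a stochastic matrix, is replaced by the
  normalisation.\<close>

definition balance_poly :: "real poly^('g set)^('g set)" where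
  "balance_poly = (\<chi> y x. if y = UNIV then 1 else trans_poly x y - (if x = y then 1 else 0))"

abbreviation balance_matrix :: "real \<Rightarrow> real^('g set)^('g set)" where
  "balance_matrix u \<equiv> \<chi> i j. poly (balance_poly$i$j) u"

lemma balance_matrix_mult:
  "(balance_matrix u *v v) $ y = (if y = UNIV then (\<Sum>x\<in>UNIV. v$x) else (\<Sum>x\<in>UNIV. v$x * T u x y) - v$y)"
proof -
  have "poly (balance_poly $ y $ x) u = (if y = UNIV then 1 else T u x y - (if x = y then 1 else 0))" for x
    by (simp add: balance_poly_def poly_trans_poly)
  moreover have "(\<Sum>x\<in>UNIV. (T u x y - (if x = y then 1 else 0)) * v$x) = (\<Sum>x\<in>UNIV. v$x * T u x y) - v$y"
    by (simp add: algebra_simps sum_subtractf of_bool_def[symmetric])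
  ultimately show ?thesis by (simp add: matrix_vector_mult_def)
qed

lemma balance_matrix_pi_MSS0:
  assumes "0 < u" "u \<le> 1"
  shows "balance_matrix u *v (\<chi> x. pi_MSS0 p \<nu> u x) = (\<chi> y. if y = UNIV then 1 else 0)"
  using pi_MSS0_stationary[OF assms] by (simp add: vec_eq_iff balance_matrix_mult prob_vector_def invariant_def)

lemma balance_matrix_det_neq_0:
  assumes u: "0 < u" "u \<le> 1"
  shows "det (balance_matrix u) \<noteq> 0"
proof -
  have "v = 0" if v: "balance_matrix u *v v = 0" for v
  proof -
    define \<mu> where "\<mu> x = v$x" for x
    have sum_0: "(\<Sum>x\<in>UNIV. \<mu> x) = 0"
      using v[THEN arg_cong[where f="\<lambda>w. w$UNIV"]] by (simp add: balance_matrix_mult \<mu>_def)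
    have inv: "(\<Sum>x\<in>UNIV. \<mu> x * T u x y) = \<mu> y" if "y \<noteq> UNIV" for y
      using v[THEN arg_cong[where f="\<lambda>w. w$y"]] that by (simp add: balance_matrix_mult \<mu>_def)
    have "(\<Sum>y\<in>UNIV. (\<Sum>x\<in>UNIV. \<mu> x * T u x y) - \<mu> y)
        = (\<Sum>x\<in>UNIV. \<mu> x * (\<Sum>y\<in>UNIV. T u x y)) - (\<Sum>y\<in>UNIV. \<mu> y)"
      unfolding sum_subtractf sum_distrib_left by (subst sum.swap) simp
    then have "(\<Sum>y\<in>UNIV. (\<Sum>x\<in>UNIV. \<mu> x * T u x y) - \<mu> y) = 0"
      using sum_0 by (simp add: sum_trans)
    moreover have "(\<Sum>y\<in>UNIV - {UNIV}. (\<Sum>x\<in>UNIV. \<mu> x * T u x y) - \<mu> y) = 0"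
      by (intro sum.neutral) (auto simp: inv)
    ultimately have "(\<Sum>x\<in>UNIV. \<mu> x * T u x UNIV) = \<mu> UNIV"
      by (simp add: sum.remove[of UNIV UNIV])
    then have "(\<Sum>x\<in>UNIV. \<mu> x * T u x y) = \<mu> y" for y
      using inv by (cases "y = UNIV") auto
    then have "invariant (T u) \<mu>" by (simp add: invariant_def)
    then have \<mu>_eq: "\<mu> = (\<lambda>x. (\<Sum>y\<in>UNIV. \<mu> y) * pi_MSS0 p \<nu> u x)"
      using invariant_eq_sum_mult_stationary[OF stochastic_trans _ pi_MSS0_stationary[OF u]]
        reachable_UNIV[OF u] u by auto
    have "\<mu> x = 0" for x using fun_cong[OF \<mu>_eq, of x] sum_0 by simp
    then show "v = 0" by (simp add: vec_eq_iff \<mu>_def)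
  qed
  then show ?thesis
    by (metis invertible_det_nz invertible_left_inverse matrix_left_invertible_ker)
qed

lemma pi_MSS0_rational: "rational_on {0<..1} (\<lambda>u. pi_MSS0 p \<nu> u x)"
  using rational_on_cramer[of "{0<..1}" balance_poly "\<lambda>u. \<chi> x. pi_MSS0 p \<nu> u x"]
    balance_matrix_det_neq_0 balance_matrix_pi_MSS0 by simp

lemma pi_MSS0_tendsto: "((\<lambda>u. pi_MSS0 p \<nu> u x) \<longlongrightarrow> pi_MSS p \<nu> 0 x) (at_right 0)"
proof -
  have "\<exists>L. ((\<lambda>u. pi_MSS0 p \<nu> u x) \<longlongrightarrow> L) (at_right 0)"
    using pi_MSS0_nonneg sum_subset_pi_MSS0_le_1[of _ "{x}"]
    by (intro rational_on_bounded_tendsto[OF pi_MSS0_rational, where B=1]) auto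
  then obtain L where L: "((\<lambda>u. pi_MSS0 p \<nu> u x) \<longlongrightarrow> L) (at_right 0)" by blast
  then have "pi_MSS p \<nu> 0 x = L"
    unfolding pi_MSS_def by (simp add: tendsto_Lim[OF trivial_limit_at_right_real])
  then show ?thesis using L by simp
qed

lemma pi_MSS0_ratio_tendsto:
  assumes pos: "\<And>u. 0 < u \<Longrightarrow> u \<le> 1 \<Longrightarrow> 0 < (\<Sum>y\<in>S. pi_MSS0 p \<nu> u y)" and "x \<in> S"
  shows "\<exists>L. ((\<lambda>u. pi_MSS0 p \<nu> u x / (\<Sum>y\<in>S. pi_MSS0 p \<nu> u y)) \<longlongrightarrow> L) (at_right 0)"
proof (rule rational_on_bounded_tendsto)
  show "rational_on {0<..1} (\<lambda>u. pi_MSS0 p \<nu> u x / (\<Sum>y\<in>S. pi_MSS0 p \<nu> u y))"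
    using pos by (intro rational_on_divide rational_on_sum pi_MSS0_rational) fastforce+
  fix u :: real assume u: "0 < u" "u \<le> 1"
  have "pi_MSS0 p \<nu> u x \<le> (\<Sum>y\<in>S. pi_MSS0 p \<nu> u y)"
    using \<open>x \<in> S\<close> pi_MSS0_nonneg[OF u] by (intro member_le_sum) auto
  then show "\<bar>pi_MSS0 p \<nu> u x / (\<Sum>y\<in>S. pi_MSS0 p \<nu> u y)\<bar> \<le> 1"
    using pos[OF u] pi_MSS0_nonneg[OF u, of x] by simp
qed

lemma p_UNIV: "p UNIV = p {}"
  using monomorphic_rule_eq by (auto simp: assumption1_def)

lemma d_rate_UNIV: "d_rate p g UNIV = d_rate p g {}"
  by (simp add: d_rate_def e_rate_def p_UNIV)

lemma b_total_UNIV: "b_total p UNIV = b_total p {}"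
  by (simp add: b_total_def b_rate_def e_rate_def p_UNIV)

lemma b_total_eq_sum_d_rate: "b_total p x = (\<Sum>g\<in>UNIV. d_rate p g x)"
  unfolding b_total_def b_rate_def d_rate_def by (rule sum.swap)

definition fix_prob_A :: "'g set \<Rightarrow> real" where
  "fix_prob_A x = lim (\<lambda>t. T_pow 0 t x UNIV)"

definition fix_prob_a :: "'g set \<Rightarrow> real" where
  "fix_prob_a x = lim (\<lambda>t. T_pow 0 t x {})"

lemma trans_pow_0_absorbed_tendsto:
  assumes "\<forall>e\<in>events. replace_state e z = z"
  shows "(\<lambda>t. T_pow 0 t x z) \<longlonglongrightarrow> lim (\<lambda>t. T_pow 0 t x z)"
proof -
  have "\<forall>t. T_pow 0 t x z \<le> 1" using trans_pow_le_1[of 0] by auto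
  then obtain L where "(\<lambda>t. T_pow 0 t x z) \<longlonglongrightarrow> L"
    using incseq_convergent[OF trans_pow_0_absorbed_mono[OF assms]] by blast
  then show ?thesis by (simp add: limI)
qed

lemma fix_prob_A_tendsto: "(\<lambda>t. T_pow 0 t x UNIV) \<longlonglongrightarrow> fix_prob_A x"
  unfolding fix_prob_A_def by (rule trans_pow_0_absorbed_tendsto) simp

lemma fix_prob_a_tendsto: "(\<lambda>t. T_pow 0 t x {}) \<longlonglongrightarrow> fix_prob_a x"
  unfolding fix_prob_a_def by (rule trans_pow_0_absorbed_tendsto) simp

lemma fix_prob_A_harmonic: "fix_prob_A x = (\<Sum>z\<in>UNIV. T 0 x z * fix_prob_A z)"
proof -
  have "(\<lambda>t. T_pow 0 (Suc t) x UNIV) \<longlonglongrightarrow> fix_prob_A x"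
    using fix_prob_A_tendsto by (rule LIMSEQ_Suc)
  moreover have "(\<lambda>t. T_pow 0 (Suc t) x UNIV) \<longlonglongrightarrow> (\<Sum>z\<in>UNIV. T 0 x z * fix_prob_A z)"
    unfolding trans_pow_Suc_left by (intro tendsto_intros fix_prob_A_tendsto)
  ultimately show ?thesis by (rule LIMSEQ_unique)
qed

lemma fix_prob_A_nonneg: "0 \<le> fix_prob_A x"
  by (rule LIMSEQ_le_const[OF fix_prob_A_tendsto]) (use trans_pow_nonneg[of 0] in auto)

lemma fix_prob_A_le_1: "fix_prob_A x \<le> 1"
  by (rule LIMSEQ_le_const2[OF fix_prob_A_tendsto]) (use trans_pow_le_1[of 0] in auto)

lemma fix_prob_a_nonneg: "0 \<le> fix_prob_a x"
  by (rule LIMSEQ_le_const[OF fix_prob_a_tendsto]) (use trans_pow_nonneg[of 0] in auto)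

lemma fix_prob_A_UNIV: "fix_prob_A UNIV = 1"
  using fix_prob_A_tendsto[of UNIV] by (simp add: trans_pow_0_fixed LIMSEQ_const_iff)

lemma fix_prob_A_empty: "fix_prob_A {} = 0"
  using fix_prob_A_tendsto[of "{}"] by (simp add: trans_pow_0_fixed LIMSEQ_const_iff)

lemma fix_prob_A_g0_ge: "fixation_bound \<le> fix_prob_A {g0}"
  using trans_pow_fixation_ge[of 0 "{g0}"]
    incseq_le[OF trans_pow_0_absorbed_mono fix_prob_A_tendsto, of "length es"]
  by (simp add: order_trans)

lemma fix_prob_a_g0_ge: "fixation_bound \<le> fix_prob_a (UNIV - {g0})"
  using trans_pow_fixation_ge[of 0 "UNIV - {g0}"]
    incseq_le[OF trans_pow_0_absorbed_mono fix_prob_a_tendsto, of "length es"]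
  by (simp add: order_trans)

text \<open>Every \<open>length es\<close> steps it loses at least the
  fraction \<open>fixation_bound\<close>, so it decays geometrically.\<close>

definition neutral_poly_mass :: "nat \<Rightarrow> 'g set \<Rightarrow> real" where
  "neutral_poly_mass t x = (\<Sum>y\<in>polymorphic. T_pow 0 t x y)"

lemma neutral_poly_mass_nonneg: "0 \<le> neutral_poly_mass t x"
  unfolding neutral_poly_mass_def by (rule sum_nonneg) (auto intro: trans_pow_nonneg)

lemma neutral_poly_mass_le_1: "neutral_poly_mass t x \<le> 1"
  unfolding neutral_poly_mass_def by (rule sum_subset_trans_pow_0_le_1)

lemma neutral_poly_mass_monomorphic: "neutral_poly_mass t {} = 0" "neutral_poly_mass t UNIV = 0"
  by (auto simp: neutral_poly_mass_def polymorphic_def trans_pow_0_fixed intro!: sum.neutral)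

lemma neutral_poly_mass_0: "neutral_poly_mass 0 x = (if x \<in> polymorphic then 1 else 0)"
  by (simp add: neutral_poly_mass_def sum.delta')

lemma neutral_poly_mass_Suc: "(\<Sum>z\<in>UNIV. T 0 x z * neutral_poly_mass t z) = neutral_poly_mass (Suc t) x"
  unfolding neutral_poly_mass_def trans_pow_Suc_left sum_distrib_left by (rule sum.swap)

lemma neutral_poly_mass_add_le:
  assumes "\<forall>z\<in>polymorphic. neutral_poly_mass k z \<le> c" "0 \<le> c"
  shows "neutral_poly_mass (t + k) x \<le> c * neutral_poly_mass t x"
proof -
  have "neutral_poly_mass (t + k) x = (\<Sum>z\<in>UNIV. T_pow 0 t x z * neutral_poly_mass k z)"
    unfolding neutral_poly_mass_def trans_pow_add sum_distrib_left by (rule sum.swap)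
  also have "\<dots> = (\<Sum>z\<in>polymorphic. T_pow 0 t x z * neutral_poly_mass k z)"
    by (simp add: sum_split_monomorphic[of "\<lambda>z. T_pow 0 t x z * neutral_poly_mass k z"]
        neutral_poly_mass_monomorphic)
  also have "\<dots> \<le> (\<Sum>z\<in>polymorphic. T_pow 0 t x z * c)"
    using assms by (intro sum_mono mult_left_mono trans_pow_nonneg) auto
  finally show ?thesis by (simp add: neutral_poly_mass_def sum_distrib_left mult.commute)
qed

lemma neutral_poly_mass_fixation_le:
  assumes "z \<in> polymorphic"
  shows "neutral_poly_mass (length es) z \<le> 1 - fixation_bound"
proof -
  have "1 = T_pow 0 (length es) z {} + T_pow 0 (length es) z UNIV + neutral_poly_mass (length es) z"
    using sum_trans_pow[of 0 "length es" z] by (simp add: sum_split_monomorphic neutral_poly_mass_def)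
  moreover have "fixation_bound \<le> T_pow 0 (length es) z {} + T_pow 0 (length es) z UNIV"
    using trans_pow_fixation_ge[of 0 z] trans_pow_nonneg[of 0 "length es" z "{}"]
      trans_pow_nonneg[of 0 "length es" z UNIV]
    by (cases "g0 \<in> z") auto
  ultimately show ?thesis by linarith
qed

lemma neutral_poly_mass_tendsto_0: "(\<lambda>t. neutral_poly_mass t x) \<longlonglongrightarrow> 0"
proof -
  let ?r = "\<lambda>t. neutral_poly_mass t x" and ?c = "1 - fixation_bound"
  have "decseq ?r"
    using neutral_poly_mass_add_le[of 1 1 _ x] neutral_poly_mass_le_1
    by (intro decseq_SucI) simp
  then obtain L where L: "?r \<longlonglongrightarrow> L" "\<forall>t. L \<le> ?r t"
    using decseq_convergent[of ?r 0] neutral_poly_mass_nonneg by blast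
  have "?r (k * length es) \<le> ?c ^ k" for k
  proof (induction k)
    case (Suc k)
    have "?r (k * length es + length es) \<le> ?c * ?r (k * length es)"
      using neutral_poly_mass_fixation_le fixation_bound_le_1 by (intro neutral_poly_mass_add_le) auto
    also have "\<dots> \<le> ?c * ?c ^ k"
      using Suc fixation_bound_le_1 by (intro mult_left_mono) auto
    finally show ?case by (simp add: add.commute)
  qed (simp add: neutral_poly_mass_le_1)
  then have "\<forall>k. L \<le> ?c ^ k" using L(2) order_trans by blast
  moreover have "(\<lambda>k. ?c ^ k) \<longlonglongrightarrow> 0"
    using fixation_bound_pos fixation_bound_le_1 by (intro LIMSEQ_power_zero) auto
  ultimately have "L \<le> 0" by (intro LIMSEQ_le_const) auto
  moreover have "0 \<le> L" using L(1) neutral_poly_mass_nonneg by (intro LIMSEQ_le_const) auto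
  ultimately show ?thesis using L(1) by simp
qed

lemma fix_prob_A_add_fix_prob_a: "fix_prob_A x + fix_prob_a x = 1"
proof -
  have "T_pow 0 t x UNIV + T_pow 0 t x {} = 1 - neutral_poly_mass t x" for t
    using sum_trans_pow[of 0 t x] by (simp add: sum_split_monomorphic neutral_poly_mass_def)
  then have "(\<lambda>t. T_pow 0 t x UNIV + T_pow 0 t x {}) \<longlonglongrightarrow> 1 - 0"
    by (simp only:) (intro tendsto_intros neutral_poly_mass_tendsto_0)
  moreover have "(\<lambda>t. T_pow 0 t x UNIV + T_pow 0 t x {}) \<longlonglongrightarrow> fix_prob_A x + fix_prob_a x"
    by (intro tendsto_intros fix_prob_A_tendsto fix_prob_a_tendsto)
  ultimately show ?thesis using LIMSEQ_unique by fastforce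
qed

lemma rho_A_eq: "rho_A p \<nu> = (\<Sum>g\<in>UNIV. d_rate p g {} * fix_prob_A {g}) / b_total p {}"
  unfolding rho_A_def fix_prob_A_def by (simp add: sum_divide_distrib)

lemma rho_a_eq: "rho_a p \<nu> = (\<Sum>g\<in>UNIV. d_rate p g {} * fix_prob_a (UNIV - {g})) / b_total p {}"
  unfolding rho_a_def fix_prob_a_def by (simp add: sum_divide_distrib d_rate_UNIV b_total_UNIV)

lemma b_total_pos: "0 < b_total p {}"
  unfolding b_total_eq_sum_d_rate by (rule sum_pos) (auto intro: d_rate_pos)

lemma rho_A_pos: "0 < rho_A p \<nu>"
proof -
  have "d_rate p g0 {} * fix_prob_A {g0} \<le> (\<Sum>g\<in>UNIV. d_rate p g {} * fix_prob_A {g})"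
    by (rule member_le_sum) (auto intro!: mult_nonneg_nonneg fix_prob_A_nonneg d_rate_nonneg)
  moreover have "0 < d_rate p g0 {} * fix_prob_A {g0}"
    using d_rate_pos fix_prob_A_g0_ge fixation_bound_pos by simp
  ultimately show ?thesis unfolding rho_A_eq using b_total_pos by simp
qed

lemma rho_a_pos: "0 < rho_a p \<nu>"
proof -
  have "d_rate p g0 {} * fix_prob_a (UNIV - {g0}) \<le> (\<Sum>g\<in>UNIV. d_rate p g {} * fix_prob_a (UNIV - {g}))"
    by (rule member_le_sum) (auto intro!: mult_nonneg_nonneg fix_prob_a_nonneg d_rate_nonneg)
  moreover have "0 < d_rate p g0 {} * fix_prob_a (UNIV - {g0})"
    using d_rate_pos fix_prob_a_g0_ge fixation_bound_pos by simp
  ultimately show ?thesis unfolding rho_a_eq using b_total_pos by simp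
qed

abbreviation pi_u :: "real \<Rightarrow> 'g set \<Rightarrow> real" where
  "pi_u u x \<equiv> pi_MSS0 p \<nu> u x"

abbreviation pi_0 :: "'g set \<Rightarrow> real" where
  "pi_0 x \<equiv> pi_MSS p \<nu> 0 x"

text \<open>Since \<open>\<pi>\<^sub>u\<close> is invariant for \<open>T u\<close> and \<open>T u - T 0 = O(u)\<close>, the one-step drift of a
  bounded function under the neutral chain has \<open>\<pi>\<^sub>u\<close>-expectation \<open>O(u)\<close>.\<close>

lemma stationary_neutral_drift_ge:
  assumes u: "0 < u" "u \<le> 1" and f: "\<And>z. 0 \<le> f z" "\<And>z. f z \<le> M"
  shows "- (real CARD('g set) * real CARD('g) * u * M)
           \<le> (\<Sum>x\<in>UNIV. pi_u u x * ((\<Sum>z\<in>UNIV. T 0 x z * f z) - f x))"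
proof -
  let ?C = "real CARD('g set) * real CARD('g) * u * M"
  have "(\<Sum>x\<in>UNIV. pi_u u x * ((\<Sum>z\<in>UNIV. T 0 x z * f z) - f x))
      = (\<Sum>x\<in>UNIV. pi_u u x * (\<Sum>z\<in>UNIV. T u x z * f z)) - (\<Sum>x\<in>UNIV. pi_u u x * f x)
        - (\<Sum>x\<in>UNIV. pi_u u x * (\<Sum>z\<in>UNIV. (T u x z - T 0 x z) * f z))"
    by (simp add: algebra_simps sum_subtractf sum.distrib)
  also have "(\<Sum>x\<in>UNIV. pi_u u x * (\<Sum>z\<in>UNIV. T u x z * f z)) = (\<Sum>x\<in>UNIV. pi_u u x * f x)"
    by (rule invariant_sum_expectation[OF pi_MSS0_stationary(2)[OF u]])
  finally have "(\<Sum>x\<in>UNIV. pi_u u x * ((\<Sum>z\<in>UNIV. T 0 x z * f z) - f x))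
      = - (\<Sum>x\<in>UNIV. pi_u u x * (\<Sum>z\<in>UNIV. (T u x z - T 0 x z) * f z))" by simp
  moreover have "(\<Sum>x\<in>UNIV. pi_u u x * (\<Sum>z\<in>UNIV. (T u x z - T 0 x z) * f z)) \<le> (\<Sum>x\<in>UNIV. pi_u u x * ?C)"
    using sum_trans_diff_le[of u f M] u f pi_MSS0_nonneg[OF u]
    by (intro sum_mono mult_left_mono) (auto simp: abs_le_iff)
  moreover have "(\<Sum>x\<in>UNIV. pi_u u x * ?C) = ?C"
    using sum_pi_MSS0[OF u] by (simp add: sum_distrib_right[symmetric])
  ultimately show ?thesis by linarith
qed

lemma sum_polymorphic_pi_MSS0_le:
  assumes u: "0 < u" "u \<le> 1"
  shows "fixation_bound * (\<Sum>x\<in>polymorphic. pi_u u x)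
           \<le> real CARD('g set) * real CARD('g) * real (length es) * u"
proof -
  let ?m = "length es" and ?r = neutral_poly_mass
  define f where "f z = (\<Sum>j<?m. ?r j z)" for z
  have f_bounds: "0 \<le> f z" "f z \<le> real ?m" for z
    using sum_mono[of "{..<?m}" "\<lambda>j. ?r j z" "\<lambda>_. 1"]
    by (auto simp: f_def neutral_poly_mass_le_1 intro!: sum_nonneg neutral_poly_mass_nonneg)
  have telescope: "(\<Sum>z\<in>UNIV. T 0 x z * f z) - f x = ?r ?m x - ?r 0 x" for x
  proof -
    have "(\<Sum>z\<in>UNIV. T 0 x z * f z) = (\<Sum>j<?m. ?r (Suc j) x)"
      unfolding f_def sum_distrib_left by (subst sum.swap) (simp add: neutral_poly_mass_Suc)
    then show ?thesis
      using sum_lessThan_telescope[of "\<lambda>j. ?r j x" ?m] by (simp add: f_def sum_subtractf)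
  qed
  have "- (real CARD('g set) * real CARD('g) * u * real ?m)
      \<le> (\<Sum>x\<in>UNIV. pi_u u x * ((\<Sum>z\<in>UNIV. T 0 x z * f z) - f x))"
    by (rule stationary_neutral_drift_ge[OF u]) (use f_bounds in auto)
  also have "\<dots> = (\<Sum>x\<in>UNIV. pi_u u x * (?r ?m x - ?r 0 x))"
    by (simp only: telescope)
  also have "\<dots> \<le> - fixation_bound * (\<Sum>x\<in>polymorphic. pi_u u x)"
  proof -
    have "(\<Sum>x\<in>UNIV. pi_u u x * (?r ?m x - ?r 0 x)) = (\<Sum>x\<in>polymorphic. pi_u u x * (?r ?m x - ?r 0 x))"
      unfolding sum_split_monomorphic[of "\<lambda>x. pi_u u x * (?r ?m x - ?r 0 x)"]
      by (simp add: neutral_poly_mass_monomorphic neutral_poly_mass_0 polymorphic_def)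
    also have "\<dots> \<le> (\<Sum>x\<in>polymorphic. pi_u u x * (- fixation_bound))"
      using pi_MSS0_nonneg[OF u]
      by (intro sum_mono mult_left_mono) (auto simp: neutral_poly_mass_0 dest!: neutral_poly_mass_fixation_le)
    finally show ?thesis by (simp add: sum_distrib_left sum_negf mult.commute)
  qed
  finally show ?thesis by (simp add: mult_ac)
qed

lemma pi_MSS0_flip_site_g0_ge:
  assumes u: "0 < u" "u \<le> 1" and x: "x = {} \<or> x = UNIV"
  shows "min_rate * min_bias ^ CARD('g) * u * pi_u u x \<le> pi_u u (flip_site g0 x)"
proof -
  have u': "0 \<le> u" "u \<le> 1" using u by auto
  obtain e where e: "e \<in> set es" "g0 \<in> fst e" using fixation_replaces_g0 by blast
  then have "e \<in> events" using fixation_events by auto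
  have "min_rate * min_bias ^ CARD('g) * u \<le> p x e * (min_bias ^ CARD('g) * u)"
    using min_rate_le[OF e(1), of x] min_bias_pos u by (simp add: mult.assoc mult_right_mono)
  also have "\<dots> \<le> T u x (flip_site g0 x)"
    by (rule trans_ge_one_mutation[OF \<open>e \<in> events\<close> u' e(2)]) (use x in \<open>auto simp: mem_flip_site\<close>)
  finally have "min_rate * min_bias ^ CARD('g) * u * pi_u u x \<le> T u x (flip_site g0 x) * pi_u u x"
    using pi_MSS0_nonneg[OF u] by (rule mult_right_mono)
  also have "\<dots> \<le> (\<Sum>z\<in>UNIV. pi_u u z * T u z (flip_site g0 x))"
    by (subst mult.commute, rule member_le_sum)
      (auto intro!: mult_nonneg_nonneg pi_MSS0_nonneg[OF u] trans_nonneg u')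
  also have "\<dots> = pi_u u (flip_site g0 x)"
    using pi_MSS0_stationary(2)[OF u] by (simp add: invariant_def)
  finally show ?thesis .
qed

lemma sum_polymorphic_pi_MSS0_ge:
  assumes poly: "(polymorphic :: 'g set set) \<noteq> {}" and u: "0 < u" "u \<le> 1"
  shows "min_rate * min_bias ^ CARD('g) * u * (pi_u u {} + pi_u u UNIV) \<le> (\<Sum>x\<in>polymorphic. pi_u u x)"
proof -
  have "{g0} \<noteq> UNIV"
  proof
    assume "{g0} = UNIV"
    then have "x = {} \<or> x = UNIV" for x :: "'g set" by (metis subset_singletonD subset_UNIV)
    then have "(polymorphic :: 'g set set) = {}" unfolding polymorphic_def by auto
    then show False using poly by simp
  qed
  then have "{{g0}, UNIV - {g0}} \<subseteq> polymorphic" by (auto simp: polymorphic_def)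
  moreover have "{g0} \<noteq> UNIV - {g0}" by auto
  ultimately have "pi_u u {g0} + pi_u u (UNIV - {g0}) \<le> (\<Sum>x\<in>polymorphic. pi_u u x)"
    using sum_mono2[of polymorphic "{{g0}, UNIV - {g0}}" "pi_u u"] pi_MSS0_nonneg[OF u] by simp
  moreover have "flip_site g0 {} = {g0}" "flip_site g0 UNIV = UNIV - {g0}"
    by (auto simp: flip_site_def)
  ultimately show ?thesis
    using pi_MSS0_flip_site_g0_ge[OF u, of "{}"] pi_MSS0_flip_site_g0_ge[OF u, of UNIV]
    by (simp add: distrib_left)
qed

lemma sum_polymorphic_pi_MSS0_pos:
  assumes "(polymorphic :: 'g set set) \<noteq> {}" "0 < u" "u \<le> 1"
  shows "0 < (\<Sum>x\<in>polymorphic. pi_u u x)"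
proof (cases "pi_u u {} + pi_u u UNIV = 0")
  case True
  then show ?thesis using sum_pi_MSS0[OF assms(2,3)] by (simp add: sum_split_monomorphic)
next
  case False
  then have "0 < pi_u u {} + pi_u u UNIV"
    using pi_MSS0_nonneg[OF assms(2,3), of "{}"] pi_MSS0_nonneg[OF assms(2,3), of UNIV] by simp
  then show ?thesis
    using sum_polymorphic_pi_MSS0_ge[OF assms] min_rate_pos min_bias_pos assms(2)
    by (smt (verit) mult_pos_pos zero_less_power)
qed

lemma sum_polymorphic_pi_MSS0_tendsto_0: "((\<lambda>u. \<Sum>x\<in>polymorphic. pi_u u x) \<longlongrightarrow> 0) (at_right 0)"
proof (rule real_tendsto_sandwich[where f="\<lambda>_. 0"])
  let ?C = "real CARD('g set) * real CARD('g) * real (length es) / fixation_bound"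
  show "eventually (\<lambda>u. 0 \<le> (\<Sum>x\<in>polymorphic. pi_u u x)) (at_right 0)"
    using eventually_at_right_0_le_1 by eventually_elim (auto intro!: sum_nonneg pi_MSS0_nonneg)
  show "eventually (\<lambda>u. (\<Sum>x\<in>polymorphic. pi_u u x) \<le> ?C * u) (at_right 0)"
    using eventually_at_right_0_le_1 by eventually_elim
      (use sum_polymorphic_pi_MSS0_le fixation_bound_pos in \<open>auto simp: field_simps mult.commute\<close>)
  show "((\<lambda>u. ?C * u) \<longlongrightarrow> 0) (at_right 0)"
    using tendsto_mult[OF tendsto_const[of ?C] tendsto_ident_at[of 0 "{0<..}"]] by simp
qed simp

lemma pi_MSS_0_polymorphic:
  assumes "x \<in> polymorphic"
  shows "pi_0 x = 0"
proof -
  have "((\<lambda>u. pi_u u x) \<longlongrightarrow> 0) (at_right 0)"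
  proof (rule real_tendsto_sandwich[where f="\<lambda>_. 0" and h="\<lambda>u. \<Sum>x\<in>polymorphic. pi_u u x"])
    show "eventually (\<lambda>u. 0 \<le> pi_u u x) (at_right 0)"
      using eventually_at_right_0_le_1 by eventually_elim (auto intro!: pi_MSS0_nonneg)
    show "eventually (\<lambda>u. pi_u u x \<le> (\<Sum>x\<in>polymorphic. pi_u u x)) (at_right 0)"
      using eventually_at_right_0_le_1 by eventually_elim (auto intro!: member_le_sum pi_MSS0_nonneg assms)
  qed (auto intro: sum_polymorphic_pi_MSS0_tendsto_0)
  then show ?thesis using pi_MSS0_tendsto tendsto_unique[OF trivial_limit_at_right_real] by blast
qed

lemma pi_MSS_0_nonneg: "0 \<le> pi_0 x"
  by (rule tendsto_lowerbound[OF pi_MSS0_tendsto _ trivial_limit_at_right_real])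
     (use eventually_at_right_0_le_1 in \<open>eventually_elim, auto intro: pi_MSS0_nonneg\<close>)

lemma pi_MSS_0_le_1: "pi_0 x \<le> 1"
proof -
  have "eventually (\<lambda>u. pi_u u x \<le> 1) (at_right 0)"
    using eventually_at_right_0_le_1 by eventually_elim (use sum_subset_pi_MSS0_le_1[of _ "{x}"] in auto)
  then show ?thesis by (rule tendsto_upperbound[OF pi_MSS0_tendsto _ trivial_limit_at_right_real])
qed

lemma pi_MSS_0_empty_add_UNIV: "pi_0 {} + pi_0 UNIV = 1"
proof -
  have "((\<lambda>u. pi_u u {} + pi_u u UNIV + (\<Sum>x\<in>polymorphic. pi_u u x)) \<longlongrightarrow> pi_0 {} + pi_0 UNIV + 0) (at_right 0)"
    by (intro tendsto_intros pi_MSS0_tendsto sum_polymorphic_pi_MSS0_tendsto_0)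
  moreover have "pi_u u {} + pi_u u UNIV + (\<Sum>x\<in>polymorphic. pi_u u x) = 1" if "0 < u" "u \<le> 1" for u
    using sum_pi_MSS0[OF that] sum_split_monomorphic[of "pi_u u"] by simp
  then have "eventually (\<lambda>u. pi_u u {} + pi_u u UNIV + (\<Sum>x\<in>polymorphic. pi_u u x) = 1) (at_right 0)"
    using eventually_at_right_0_le_1 by (auto elim: eventually_mono)
  ultimately have "((\<lambda>u. 1) \<longlongrightarrow> pi_0 {} + pi_0 UNIV + 0) (at_right (0::real))"
    by (rule Lim_transform_eventually)
  then have "pi_0 {} + pi_0 UNIV + 0 = 1"
    using tendsto_unique[OF trivial_limit_at_right_real _ tendsto_const] by blast
  then show ?thesis by simp
qed

lemma E_MSS_0_eq: "E_MSS p \<nu> f 0 = pi_0 {} * f {} + pi_0 UNIV * f UNIV"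
  unfolding E_MSS_def by (simp add: sum_split_monomorphic[of "\<lambda>x. pi_0 x * f x"] pi_MSS_0_polymorphic)

lemma trans_fix_prob_A_diff_le:
  assumes "0 < u" "u \<le> 1"
  shows "\<bar>(\<Sum>y\<in>UNIV. T u x y * fix_prob_A y) - fix_prob_A x\<bar> \<le> real CARD('g set) * real CARD('g) * u"
proof -
  have "(\<Sum>y\<in>UNIV. T u x y * fix_prob_A y) - fix_prob_A x = (\<Sum>y\<in>UNIV. (T u x y - T 0 x y) * fix_prob_A y)"
    by (subst (2) fix_prob_A_harmonic) (simp add: sum_subtractf left_diff_distrib)
  then show ?thesis
    using sum_trans_diff_le[of u fix_prob_A 1 x] assms fix_prob_A_nonneg fix_prob_A_le_1 by simp
qed

lemma first_order_fix_prob_A_empty: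
  "((\<lambda>u. ((\<Sum>y\<in>UNIV. T u {} y * fix_prob_A y) - fix_prob_A {}) / u)
     \<longlongrightarrow> \<nu> * (\<Sum>g\<in>UNIV. d_rate p g {} * fix_prob_A {g})) (at_right 0)"
  using trans_first_order_tendsto[of "{}" fix_prob_A]
  by (simp add: fix_prob_A_empty mutant_prob_def flip_site_def sum_distrib_left algebra_simps)

lemma first_order_fix_prob_A_UNIV:
  "((\<lambda>u. ((\<Sum>y\<in>UNIV. T u UNIV y * fix_prob_A y) - fix_prob_A UNIV) / u)
     \<longlongrightarrow> - ((1 - \<nu>) * (\<Sum>g\<in>UNIV. d_rate p g {} * fix_prob_a (UNIV - {g})))) (at_right 0)"
proof -
  have "(\<Sum>y\<in>UNIV. T u UNIV y * fix_prob_A y) - fix_prob_A UNIV = (\<Sum>y\<in>UNIV. T u UNIV y * (fix_prob_A y - 1))" for u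
    by (simp add: right_diff_distrib sum_subtractf sum_trans fix_prob_A_UNIV)
  moreover have "((\<lambda>u. (\<Sum>y\<in>UNIV. T u UNIV y * (fix_prob_A y - 1)) / u) \<longlongrightarrow>
      (\<Sum>g\<in>UNIV. d_rate p g UNIV * (mutant_prob UNIV g * (fix_prob_A (flip_site g UNIV) - 1)))) (at_right 0)"
    by (rule trans_first_order_tendsto) (auto simp: fix_prob_A_UNIV)
  moreover have "(\<Sum>g\<in>UNIV. d_rate p g UNIV * (mutant_prob UNIV g * (fix_prob_A (flip_site g UNIV) - 1)))
      = - ((1 - \<nu>) * (\<Sum>g\<in>UNIV. d_rate p g {} * fix_prob_a (UNIV - {g})))"
  proof -
    have "fix_prob_A (UNIV - {g}) - 1 = - fix_prob_a (UNIV - {g})" for g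
      using fix_prob_A_add_fix_prob_a[of "UNIV - {g}"] by linarith
    then have "(\<Sum>g\<in>UNIV. d_rate p g UNIV * (mutant_prob UNIV g * (fix_prob_A (flip_site g UNIV) - 1)))
        = (\<Sum>g\<in>UNIV. - ((1 - \<nu>) * (d_rate p g {} * fix_prob_a (UNIV - {g}))))"
      by (intro sum.cong refl) (simp add: mutant_prob_def flip_site_def d_rate_UNIV)
    then show ?thesis by (simp add: sum_negf sum_distrib_left)
  qed
  ultimately show ?thesis by simp
qed

lemma polymorphic_fix_prob_A_drift_tendsto_0:
  "((\<lambda>u. \<Sum>x\<in>polymorphic. pi_u u x * (((\<Sum>y\<in>UNIV. T u x y * fix_prob_A y) - fix_prob_A x) / u))
     \<longlongrightarrow> 0) (at_right 0)"
proof (rule Lim_null_comparison)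
  let ?\<Phi> = "\<lambda>u x. ((\<Sum>y\<in>UNIV. T u x y * fix_prob_A y) - fix_prob_A x) / u"
  let ?C = "real CARD('g set) * real CARD('g)"
  show "eventually (\<lambda>u. norm (\<Sum>x\<in>polymorphic. pi_u u x * ?\<Phi> u x) \<le> ?C * (\<Sum>x\<in>polymorphic. pi_u u x))
      (at_right 0)"
    using eventually_at_right_0_le_1
  proof eventually_elim
    case (elim u)
    have bound: "\<bar>?\<Phi> u x\<bar> \<le> ?C" for x
      using trans_fix_prob_A_diff_le[of u x] elim by (simp add: abs_divide divide_le_eq mult.commute)
    have "\<bar>pi_u u x * ?\<Phi> u x\<bar> \<le> pi_u u x * ?C" for x
      using mult_left_mono[OF bound pi_MSS0_nonneg[of u x]] pi_MSS0_nonneg[of u x] elim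
      by (simp add: abs_mult)
    then have "norm (\<Sum>x\<in>polymorphic. pi_u u x * ?\<Phi> u x) \<le> (\<Sum>x\<in>polymorphic. pi_u u x * ?C)"
      using sum_abs[of "\<lambda>x. pi_u u x * ?\<Phi> u x" polymorphic] sum_mono[of polymorphic]
      by (smt (verit) real_norm_def)
    then show ?case by (simp add: sum_distrib_right mult.commute)
  qed
  show "((\<lambda>u. ?C * (\<Sum>x\<in>polymorphic. pi_u u x)) \<longlongrightarrow> 0) (at_right 0)"
    using tendsto_mult_right_zero[OF sum_polymorphic_pi_MSS0_tendsto_0] by simp
qed

text \<open>Let \<open>h\<close> be the fixation probability of \<open>A\<close> in the neutral chain. At stationarity the
  expected change of \<open>h\<close> in one step is zero; dividing by \<open>u\<close> and letting \<open>u \<rightarrow> 0\<close>, only the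
  monomorphic states survive, where the change is the mutant flux times the fixation
  probability of the mutant.\<close>

lemma pi_MSS_0_balance:
  "pi_0 {} * (\<nu> * (\<Sum>g\<in>UNIV. d_rate p g {} * fix_prob_A {g}))
     = pi_0 UNIV * ((1 - \<nu>) * (\<Sum>g\<in>UNIV. d_rate p g {} * fix_prob_a (UNIV - {g})))"
proof -
  define \<Phi> where "\<Phi> u x = ((\<Sum>y\<in>UNIV. T u x y * fix_prob_A y) - fix_prob_A x) / u" for u x
  have stationary_zero: "(\<Sum>x\<in>UNIV. pi_u u x * \<Phi> u x) = 0" if "0 < u" "u \<le> 1" for u
  proof -
    have "(\<Sum>x\<in>UNIV. pi_u u x * (\<Sum>y\<in>UNIV. T u x y * fix_prob_A y)) = (\<Sum>x\<in>UNIV. pi_u u x * fix_prob_A x)"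
      by (rule invariant_sum_expectation[OF pi_MSS0_stationary(2)[OF that]])
    then show ?thesis by (simp add: \<Phi>_def sum_divide_distrib[symmetric] right_diff_distrib sum_subtractf)
  qed
  have "pi_u u {} * \<Phi> u {} + pi_u u UNIV * \<Phi> u UNIV + (\<Sum>x\<in>polymorphic. pi_u u x * \<Phi> u x) = 0"
    if "0 < u" "u \<le> 1" for u
    using stationary_zero[OF that] sum_split_monomorphic[of "\<lambda>x. pi_u u x * \<Phi> u x"] by simp
  then have ev: "eventually (\<lambda>u. pi_u u {} * \<Phi> u {} + pi_u u UNIV * \<Phi> u UNIV
      + (\<Sum>x\<in>polymorphic. pi_u u x * \<Phi> u x) = 0) (at_right 0)"
    using eventually_at_right_0_le_1 by (auto elim!: eventually_mono)
  have "((\<lambda>u. \<Sum>x\<in>polymorphic. pi_u u x * \<Phi> u x) \<longlongrightarrow> 0) (at_right 0)"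
    unfolding \<Phi>_def by (rule polymorphic_fix_prob_A_drift_tendsto_0)
  then have lim: "((\<lambda>u. pi_u u {} * \<Phi> u {} + pi_u u UNIV * \<Phi> u UNIV + (\<Sum>x\<in>polymorphic. pi_u u x * \<Phi> u x))
      \<longlongrightarrow> pi_0 {} * (\<nu> * (\<Sum>g\<in>UNIV. d_rate p g {} * fix_prob_A {g}))
        + pi_0 UNIV * - ((1 - \<nu>) * (\<Sum>g\<in>UNIV. d_rate p g {} * fix_prob_a (UNIV - {g}))) + 0) (at_right 0)"
    unfolding \<Phi>_def
    by (intro tendsto_intros pi_MSS0_tendsto first_order_fix_prob_A_empty first_order_fix_prob_A_UNIV)
  have "((\<lambda>u. 0) \<longlongrightarrow> pi_0 {} * (\<nu> * (\<Sum>g\<in>UNIV. d_rate p g {} * fix_prob_A {g}))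
        + pi_0 UNIV * - ((1 - \<nu>) * (\<Sum>g\<in>UNIV. d_rate p g {} * fix_prob_a (UNIV - {g}))) + 0)
      (at_right (0::real))"
    using lim ev by (rule Lim_transform_eventually)
  then show ?thesis
    using tendsto_unique[OF trivial_limit_at_right_real tendsto_const] by fastforce
qed

lemma nu_less_pi_MSS_0_UNIV_iff: "\<nu> < pi_0 UNIV \<longleftrightarrow> rho_a p \<nu> < rho_A p \<nu>"
proof (rule less_iff_of_balance)
  show "0 < \<nu>" "\<nu> < 1" using \<nu>_pos \<nu>_less_1 by auto
  show "0 \<le> pi_0 UNIV" "pi_0 UNIV \<le> 1" by (rule pi_MSS_0_nonneg, rule pi_MSS_0_le_1)
  show "0 < rho_A p \<nu>" "0 < rho_a p \<nu>" by (rule rho_A_pos, rule rho_a_pos)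
  let ?b = "b_total p {}"
  have eq_A: "(\<Sum>g\<in>UNIV. d_rate p g {} * fix_prob_A {g}) = ?b * rho_A p \<nu>"
    and eq_a: "(\<Sum>g\<in>UNIV. d_rate p g {} * fix_prob_a (UNIV - {g})) = ?b * rho_a p \<nu>"
    using b_total_pos by (simp_all add: rho_A_eq rho_a_eq)
  have "pi_0 {} = 1 - pi_0 UNIV" using pi_MSS_0_empty_add_UNIV by simp
  then have "(1 - pi_0 UNIV) * (\<nu> * (?b * rho_A p \<nu>)) = pi_0 UNIV * ((1 - \<nu>) * (?b * rho_a p \<nu>))"
    using pi_MSS_0_balance unfolding eq_A eq_a by simp
  then have "?b * ((1 - pi_0 UNIV) * \<nu> * rho_A p \<nu>) = ?b * (pi_0 UNIV * (1 - \<nu>) * rho_a p \<nu>)"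
    by (simp only: mult_ac)
  then show "(1 - pi_0 UNIV) * \<nu> * rho_A p \<nu> = pi_0 UNIV * (1 - \<nu>) * rho_a p \<nu>"
    using b_total_pos by simp
qed

definition death_weight :: "('g \<Rightarrow> real) \<Rightarrow> real" where
  "death_weight w = (\<Sum>g\<in>UNIV. w g * d_rate p g {})"

lemma selection_monomorphic:
  "births w {} = 0" "deaths w {} = 0" "total_deaths w {} = death_weight w"
  "births w UNIV = death_weight w" "deaths w UNIV = death_weight w" "total_deaths w UNIV = death_weight w"
proof -
  have "births w UNIV = (\<Sum>g\<in>UNIV. \<Sum>h\<in>UNIV. e_rate p h g UNIV * w g)"
    unfolding births_def by (rule sum.swap)
  also have "\<dots> = (\<Sum>g\<in>UNIV. w g * d_rate p g UNIV)"
    by (simp add: d_rate_def sum_distrib_left mult.commute)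
  finally show "births w UNIV = death_weight w" by (simp add: death_weight_def d_rate_UNIV)
qed (simp_all add: births_def deaths_def total_deaths_def death_weight_def d_rate_UNIV)

lemma death_weight_one_pos: "0 < death_weight (\<lambda>_. 1)"
  unfolding death_weight_def by (rule sum_pos) (auto intro: d_rate_pos)

definition mutation_flux :: "('g \<Rightarrow> real) \<Rightarrow> real \<Rightarrow> real" where
  "mutation_flux w u = (\<Sum>x\<in>UNIV. pi_u u x * (births w x - \<nu> * total_deaths w x))"

lemma mutation_flux_tendsto: "(mutation_flux w \<longlongrightarrow> death_weight w * (pi_0 UNIV - \<nu>)) (at_right 0)"
proof -
  have "(mutation_flux w \<longlongrightarrow> (\<Sum>x\<in>UNIV. pi_0 x * (births w x - \<nu> * total_deaths w x))) (at_right 0)"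
    unfolding mutation_flux_def[abs_def] by (intro tendsto_intros pi_MSS0_tendsto)
  moreover have "(\<Sum>x\<in>UNIV. pi_0 x * (births w x - \<nu> * total_deaths w x)) = death_weight w * (pi_0 UNIV - \<nu>)"
  proof -
    have "(\<Sum>x\<in>UNIV. pi_0 x * (births w x - \<nu> * total_deaths w x))
        = pi_0 {} * (births w {} - \<nu> * total_deaths w {}) + pi_0 UNIV * (births w UNIV - \<nu> * total_deaths w UNIV)"
      using E_MSS_0_eq[of "\<lambda>x. births w x - \<nu> * total_deaths w x"] unfolding E_MSS_def .
    also have "\<dots> = death_weight w * (pi_0 UNIV - \<nu> * (pi_0 {} + pi_0 UNIV))"
      by (simp add: selection_monomorphic algebra_simps)
    finally show ?thesis using pi_MSS_0_empty_add_UNIV by simp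
  qed
  ultimately show ?thesis by simp
qed

lemma E_MSS_selection_eq:
  assumes "0 < u" "u \<le> 1"
  shows "E_MSS p \<nu> (\<lambda>x. births w x - deaths w x) u = u * mutation_flux w u"
  using stationary_selection_eq[OF pi_MSS0_stationary(2)[OF assms]] assms
  by (simp add: E_MSS_def pi_MSS_def mutation_flux_def)

lemma mutation_flux_eq_polymorphic:
  assumes "0 < u" "u \<le> 1"
  shows "u * mutation_flux w u = (\<Sum>x\<in>polymorphic. pi_u u x * (births w x - deaths w x))"
  using E_MSS_selection_eq[OF assms, of w] assms
    sum_split_monomorphic[of "\<lambda>x. pi_u u x * (births w x - deaths w x)"]
  by (simp add: E_MSS_def pi_MSS_def selection_monomorphic)

lemma E_MSS_selection_0: "E_MSS p \<nu> (\<lambda>x. births w x - deaths w x) 0 = 0"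
  by (simp add: E_MSS_0_eq selection_monomorphic)

lemma E_MSS_selection_has_derivative:
  "(E_MSS p \<nu> (\<lambda>x. births w x - deaths w x) has_real_derivative death_weight w * (pi_0 UNIV - \<nu>))
     (at 0 within {0..1})"
proof -
  have "eventually (\<lambda>u. mutation_flux w u
      = (E_MSS p \<nu> (\<lambda>x. births w x - deaths w x) u - E_MSS p \<nu> (\<lambda>x. births w x - deaths w x) 0) / (u - 0))
      (at_right 0)"
    using eventually_at_right_0_le_1 by eventually_elim (simp add: E_MSS_selection_eq E_MSS_selection_0)
  then show ?thesis
    unfolding has_field_derivative_iff at_within_Icc_at_right[OF zero_less_one]
    by (rule Lim_transform_eventually[OF mutation_flux_tendsto])
qed

lemma E_MSS_selection_derivative_pos_iff:
  assumes "0 < death_weight w"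
  shows "(\<exists>D. (E_MSS p \<nu> (\<lambda>x. births w x - deaths w x) has_real_derivative D) (at 0 within {0..1}) \<and> D > 0)
    \<longleftrightarrow> \<nu> < pi_0 UNIV"
proof -
  have unique: "D = death_weight w * (pi_0 UNIV - \<nu>)"
    if "(E_MSS p \<nu> (\<lambda>x. births w x - deaths w x) has_real_derivative D) (at 0 within {0..1})" for D
    using that E_MSS_selection_has_derivative[of w] tendsto_unique[OF trivial_limit_at_right_real]
    unfolding has_field_derivative_iff at_within_Icc_at_right[OF zero_less_one] by blast
  show ?thesis
  proof
    assume "\<exists>D. (E_MSS p \<nu> (\<lambda>x. births w x - deaths w x) has_real_derivative D) (at 0 within {0..1}) \<and> D > 0"
    then obtain D where "(E_MSS p \<nu> (\<lambda>x. births w x - deaths w x) has_real_derivative D) (at 0 within {0..1})"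
      and "D > 0" by blast
    then have "0 < death_weight w * (pi_0 UNIV - \<nu>)" using unique by simp
    then show "\<nu> < pi_0 UNIV" using assms by (simp add: zero_less_mult_iff)
  next
    assume "\<nu> < pi_0 UNIV"
    then show "\<exists>D. (E_MSS p \<nu> (\<lambda>x. births w x - deaths w x) has_real_derivative D) (at 0 within {0..1}) \<and> D > 0"
      using E_MSS_selection_has_derivative[of w] assms by auto
  qed
qed

lemma pi_RMC_tendsto:
  assumes poly: "(polymorphic :: 'g set set) \<noteq> {}" and "x \<in> polymorphic"
  shows "((\<lambda>u. pi_u u x / (\<Sum>y\<in>polymorphic. pi_u u y)) \<longlongrightarrow> pi_RMC p \<nu> x) (at_right 0)"
proof -
  obtain L where L: "((\<lambda>u. pi_u u x / (\<Sum>y\<in>polymorphic. pi_u u y)) \<longlongrightarrow> L) (at_right 0)"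
    using pi_MSS0_ratio_tendsto sum_polymorphic_pi_MSS0_pos[OF poly] \<open>x \<in> polymorphic\<close> by blast
  have "(\<Sum>y\<in>polymorphic. pi_u u y) = 1 - pi_u u {} - pi_u u UNIV" if "0 < u" "u \<le> 1" for u
    using sum_pi_MSS0[OF that] sum_split_monomorphic[of "pi_u u"] by simp
  then have "eventually (\<lambda>u. pi_u u x / (\<Sum>y\<in>polymorphic. pi_u u y)
      = pi_u u x / (1 - pi_u u {} - pi_u u UNIV)) (at_right 0)"
    using eventually_at_right_0_le_1 by (auto elim!: eventually_mono)
  then have "((\<lambda>u. pi_u u x / (1 - pi_u u {} - pi_u u UNIV)) \<longlongrightarrow> L) (at_right 0)"
    by (rule Lim_transform_eventually[OF L])
  then have "pi_RMC p \<nu> x = L"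
    unfolding pi_RMC_def by (rule tendsto_Lim[OF trivial_limit_at_right_real])
  then show ?thesis using L by simp
qed

text \<open>The polymorphic mass is of exact order \<open>u\<close>: at most \<open>O(u)\<close> by the fixation bound, and
  at least the mutant flux out of the monomorphic states, which carry almost all mass.\<close>

lemma polymorphic_mass_order_u:
  assumes "(polymorphic :: 'g set set) \<noteq> {}"
  shows "\<exists>a b. 0 < a \<and> eventually (\<lambda>u. a \<le> u / (\<Sum>x\<in>polymorphic. pi_u u x)
                                     \<and> u / (\<Sum>x\<in>polymorphic. pi_u u x) \<le> b) (at_right 0)"
proof -
  let ?C = "real CARD('g set) * real CARD('g) * real (length es)"
  let ?k = "min_rate * min_bias ^ CARD('g)"
  have "es \<noteq> []" using fixation_replaces_g0 by auto
  then have "0 < ?C" by simp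
  have "0 < ?k" using min_rate_pos min_bias_pos by simp
  have "((\<lambda>u. pi_u u {} + pi_u u UNIV) \<longlongrightarrow> 1) (at_right 0)"
    using tendsto_add[OF pi_MSS0_tendsto[of "{}"] pi_MSS0_tendsto[of UNIV]] pi_MSS_0_empty_add_UNIV by simp
  then have "eventually (\<lambda>u. 1/2 < pi_u u {} + pi_u u UNIV) (at_right 0)"
    by (rule order_tendstoD(1)) simp
  then have "eventually (\<lambda>u. fixation_bound / ?C \<le> u / (\<Sum>x\<in>polymorphic. pi_u u x)
      \<and> u / (\<Sum>x\<in>polymorphic. pi_u u x) \<le> 2 / ?k) (at_right 0)"
    using eventually_at_right_0_le_1
  proof eventually_elim
    case (elim u)
    then have u: "0 < u" "u \<le> 1" by auto
    have pos: "0 < (\<Sum>x\<in>polymorphic. pi_u u x)" by (rule sum_polymorphic_pi_MSS0_pos[OF assms u])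
    have "fixation_bound * (\<Sum>x\<in>polymorphic. pi_u u x) \<le> ?C * u"
      by (rule sum_polymorphic_pi_MSS0_le[OF u])
    then have lower: "fixation_bound / ?C \<le> u / (\<Sum>x\<in>polymorphic. pi_u u x)"
      using pos \<open>0 < ?C\<close> by (simp add: field_simps)
    have "?k * u * (1/2) \<le> ?k * u * (pi_u u {} + pi_u u UNIV)"
      using elim \<open>0 < ?k\<close> u by (intro mult_left_mono) auto
    then have "?k * u / 2 \<le> (\<Sum>x\<in>polymorphic. pi_u u x)"
      using sum_polymorphic_pi_MSS0_ge[OF assms u] by simp
    then have upper: "u / (\<Sum>x\<in>polymorphic. pi_u u x) \<le> 2 / ?k"
      using pos \<open>0 < ?k\<close> by (simp add: field_simps)
    show ?case using lower upper by simp
  qed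
  moreover have "0 < fixation_bound / ?C" using fixation_bound_pos \<open>0 < ?C\<close> by simp
  ultimately show ?thesis by blast
qed

lemma E_RMC_selection_pos_iff:
  assumes weight: "0 < death_weight w"
  shows "0 < E_RMC p \<nu> (\<lambda>x. births w x - deaths w x) \<longleftrightarrow> \<nu> < pi_0 UNIV"
proof -
  have E_RMC_eq: "E_RMC p \<nu> (\<lambda>x. births w x - deaths w x)
      = (\<Sum>x\<in>polymorphic. pi_RMC p \<nu> x * (births w x - deaths w x))"
    by (simp add: E_RMC_def polymorphic_def)
  show ?thesis
  proof (cases "(polymorphic :: 'g set set) = {}")
    case True
    have "eventually (\<lambda>u. mutation_flux w u = 0) (at_right 0)"
      using eventually_at_right_0_le_1 by eventually_elim (use mutation_flux_eq_polymorphic True in auto)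
    then have "((\<lambda>u. 0) \<longlongrightarrow> death_weight w * (pi_0 UNIV - \<nu>)) (at_right (0::real))"
      by (rule Lim_transform_eventually[OF mutation_flux_tendsto])
    then have "death_weight w * (pi_0 UNIV - \<nu>) = 0"
      using tendsto_unique[OF trivial_limit_at_right_real tendsto_const] by fastforce
    then show ?thesis using weight True E_RMC_eq by simp
  next
    case False
    define R where "R u = (\<Sum>x\<in>polymorphic. pi_u u x / (\<Sum>y\<in>polymorphic. pi_u u y) * (births w x - deaths w x))"
      for u
    have R_tendsto: "(R \<longlongrightarrow> E_RMC p \<nu> (\<lambda>x. births w x - deaths w x)) (at_right 0)"
      unfolding R_def[abs_def] E_RMC_eq by (intro tendsto_intros pi_RMC_tendsto[OF False])
    have R_eq: "eventually (\<lambda>u. R u = mutation_flux w u * (u / (\<Sum>y\<in>polymorphic. pi_u u y))) (at_right 0)"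
      using eventually_at_right_0_le_1
    proof eventually_elim
      case (elim u)
      have "R u = (\<Sum>x\<in>polymorphic. pi_u u x * (births w x - deaths w x)) / (\<Sum>y\<in>polymorphic. pi_u u y)"
        by (simp add: R_def sum_divide_distrib)
      also have "\<dots> = u * mutation_flux w u / (\<Sum>y\<in>polymorphic. pi_u u y)"
        using mutation_flux_eq_polymorphic[of u] elim by simp
      finally show ?case by simp
    qed
    obtain a b where "0 < a" and bounds:
      "eventually (\<lambda>u. a \<le> u / (\<Sum>x\<in>polymorphic. pi_u u x) \<and> u / (\<Sum>x\<in>polymorphic. pi_u u x) \<le> b) (at_right 0)"
      using polymorphic_mass_order_u[OF False] by blast
    have "0 < E_RMC p \<nu> (\<lambda>x. births w x - deaths w x) \<longleftrightarrow> 0 < death_weight w * (pi_0 UNIV - \<nu>)"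
      by (rule pos_iff_of_tendsto_eventually_mult[OF R_tendsto mutation_flux_tendsto R_eq bounds \<open>0 < a\<close>])
    then show ?thesis using weight by (simp add: zero_less_mult_iff)
  qed
qed

lemma E_MSS_freqA_0: "E_MSS p \<nu> freqA 0 = pi_0 UNIV"
  by (simp add: E_MSS_0_eq freqA_def)

text \<open>The ancestral lineage steps from a site to the site whose offspring replaces it.
  The reproductive value equations say exactly that \<open>g \<mapsto> d\<^sub>g v\<^sub>g\<close> is invariant for it.\<close>

definition lineage :: "'g \<Rightarrow> 'g \<Rightarrow> real" where
  "lineage h g = e_rate p g h {} / d_rate p h {}"

lemma stochastic_lineage: "stochastic lineage"
proof -
  have "(\<Sum>g\<in>UNIV. lineage h g) = 1" for h
    using d_rate_pos[of h "{}"] by (simp add: lineage_def d_rate_def sum_divide_distrib[symmetric])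
  then show ?thesis
    using e_rate_nonneg d_rate_nonneg by (simp add: stochastic_def lineage_def)
qed

lemma lineage_reaches_ancestor:
  assumes "\<forall>e\<in>set l. e \<in> events \<and> 0 < p {} e"
  shows "(h, foldr (\<circ>) (map snd l) id h) \<in> (positive_steps lineage)\<^sup>*"
  using assms
proof (induction l)
  case (Cons e l)
  let ?h = "foldr (\<circ>) (map snd l) id h"
  have e: "e \<in> events" "0 < p {} e" using Cons.prems by auto
  have step: "(?h, snd e ?h) \<in> (positive_steps lineage)\<^sup>*"
  proof (cases "?h \<in> fst e")
    case True
    have "p {} e \<le> e_rate p (snd e ?h) ?h {}"
      unfolding e_rate_def using e True by (intro member_le_sum) (auto intro: p_nonneg)
    then have "0 < lineage ?h (snd e ?h)" using e d_rate_pos by (simp add: lineage_def)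
    then show ?thesis by (simp add: positive_steps_def r_into_rtrancl)
  qed (simp add: event_fixes_outside[OF e(1)])
  have "(h, ?h) \<in> (positive_steps lineage)\<^sup>*" by (rule Cons.IH) (use Cons.prems in auto)
  moreover have "foldr (\<circ>) (map snd (e # l)) id h = snd e ?h" by simp
  ultimately show ?case using step by (metis rtrancl_trans)
qed simp

lemma reachable_lineage_g0: "(h, g0) \<in> (positive_steps lineage)\<^sup>*"
  using lineage_reaches_ancestor[of es h] fixation_events fixation_lineage by auto

definition repro_equations :: "('g \<Rightarrow> real) \<Rightarrow> bool" where
  "repro_equations v \<longleftrightarrow> (\<forall>g. d_rate p g {} * v g = (\<Sum>h\<in>UNIV. e_rate p g h {} * v h))
      \<and> (\<Sum>g\<in>UNIV. v g) = real CARD('g)"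

lemma invariant_lineage_iff: "invariant lineage (\<lambda>g. d_rate p g {} * v g)
    \<longleftrightarrow> (\<forall>g. d_rate p g {} * v g = (\<Sum>h\<in>UNIV. e_rate p g h {} * v h))"
proof -
  have term_eq: "d_rate p h {} * v h * lineage h g = e_rate p g h {} * v h" for g h
    using d_rate_pos[of h "{}"] by (simp add: lineage_def)
  have "(\<Sum>h\<in>UNIV. d_rate p h {} * v h * lineage h g) = (\<Sum>h\<in>UNIV. e_rate p g h {} * v h)" for g
    by (rule sum.cong[OF refl term_eq])
  then show ?thesis unfolding invariant_def by metis
qed

definition lineage_stationary :: "'g \<Rightarrow> real" where
  "lineage_stationary = (THE \<pi>. prob_vector \<pi> \<and> invariant lineage \<pi>)"

lemma lineage_stationary: "prob_vector lineage_stationary" "invariant lineage lineage_stationary"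
proof -
  have "\<exists>!\<pi>. prob_vector \<pi> \<and> invariant lineage \<pi>"
    using stationary_unique[OF stochastic_lineage] reachable_lineage_g0 by blast
  then have "prob_vector lineage_stationary \<and> invariant lineage lineage_stationary"
    unfolding lineage_stationary_def by (rule theI')
  then show "prob_vector lineage_stationary" "invariant lineage lineage_stationary" by auto
qed

lemma sum_lineage_stationary_div_pos: "0 < (\<Sum>g\<in>UNIV. lineage_stationary g / d_rate p g {})"
proof -
  have nonneg: "\<forall>g. 0 \<le> lineage_stationary g" and "(\<Sum>g\<in>UNIV. lineage_stationary g) = 1"
    using lineage_stationary(1) by (auto simp: prob_vector_def)
  then obtain g where "0 < lineage_stationary g"
    using sum_nonpos[of UNIV lineage_stationary] by (force simp: not_less)
  then have "0 < lineage_stationary g / d_rate p g {}" using d_rate_pos by simp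
  moreover have "lineage_stationary g / d_rate p g {} \<le> (\<Sum>h\<in>UNIV. lineage_stationary h / d_rate p h {})"
    using nonneg d_rate_nonneg by (intro member_le_sum) auto
  ultimately show ?thesis by linarith
qed

lemma repro_equations_eq:
  assumes "repro_equations v"
  shows "v = (\<lambda>g. death_weight v * lineage_stationary g / d_rate p g {})"
proof -
  have "invariant lineage (\<lambda>g. d_rate p g {} * v g)"
    unfolding invariant_lineage_iff using assms repro_equations_def by blast
  then have "(\<lambda>g. d_rate p g {} * v g) = (\<lambda>g. (\<Sum>h\<in>UNIV. d_rate p h {} * v h) * lineage_stationary g)"
    using invariant_eq_sum_mult_stationary[OF stochastic_lineage _ lineage_stationary]
      reachable_lineage_g0 by blast
  then have "d_rate p g {} * v g = death_weight v * lineage_stationary g" for g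
    by (metis (no_types, lifting) death_weight_def mult.commute sum.cong)
  then have "v g = death_weight v * lineage_stationary g / d_rate p g {}" for g
    using d_rate_pos[of g "{}"] by (simp add: field_simps)
  then show ?thesis by auto
qed

lemma repro_equations_sum_eq:
  assumes "repro_equations v"
  shows "death_weight v * (\<Sum>g\<in>UNIV. lineage_stationary g / d_rate p g {}) = real CARD('g)"
proof -
  have "real CARD('g) = (\<Sum>g\<in>UNIV. v g)" using assms by (simp add: repro_equations_def)
  also have "\<dots> = (\<Sum>g\<in>UNIV. death_weight v * lineage_stationary g / d_rate p g {})"
    by (subst repro_equations_eq[OF assms]) simp
  finally show ?thesis by (simp add: sum_distrib_left)
qed

lemma ex1_repro_equations: "\<exists>!v. repro_equations v"
proof
  define c where "c = real CARD('g) / (\<Sum>g\<in>UNIV. lineage_stationary g / d_rate p g {})"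
  show "repro_equations (\<lambda>g. c * lineage_stationary g / d_rate p g {})"
  proof -
    have "(\<lambda>g. d_rate p g {} * (c * lineage_stationary g / d_rate p g {})) = (\<lambda>g. c * lineage_stationary g)"
      using d_rate_neq_0 by (simp add: fun_eq_iff)
    moreover have "invariant lineage (\<lambda>g. c * lineage_stationary g)"
      using invariant_lincomb[OF lineage_stationary(2) lineage_stationary(2), of c 0] by simp
    ultimately have "invariant lineage (\<lambda>g. d_rate p g {} * (c * lineage_stationary g / d_rate p g {}))"
      by simp
    moreover have "(\<Sum>g\<in>UNIV. c * lineage_stationary g / d_rate p g {}) = real CARD('g)"
      unfolding times_divide_eq_right[symmetric] sum_distrib_left[symmetric] c_def
      using sum_lineage_stationary_div_pos by simp
    ultimately show ?thesis unfolding repro_equations_def invariant_lineage_iff by blast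
  qed
  fix v assume "repro_equations v"
  then have "death_weight v = c"
    using repro_equations_sum_eq sum_lineage_stationary_div_pos by (simp add: c_def field_simps)
  then show "v = (\<lambda>g. c * lineage_stationary g / d_rate p g {})"
    using repro_equations_eq[OF \<open>repro_equations v\<close>] by simp
qed

lemma repro_equations_repro_values: "repro_equations (repro_values p)"
  using theI'[OF ex1_repro_equations] unfolding repro_values_def repro_equations_def .

lemma death_weight_repro_values_pos: "0 < death_weight (repro_values p)"
proof -
  have "0 < death_weight (repro_values p) * (\<Sum>g\<in>UNIV. lineage_stationary g / d_rate p g {})"
    using repro_equations_sum_eq[OF repro_equations_repro_values] by simp
  then show ?thesis using sum_lineage_stationary_div_pos by (simp add: zero_less_mult_iff)
qed

lemma E_MSS_freqA_hat_0: "E_MSS p \<nu> (freqA_hat p) 0 = pi_0 UNIV"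
  using repro_equations_repro_values by (simp add: E_MSS_0_eq freqA_hat_def repro_equations_def)

end

lemma fixation_model_of_axioms:
  assumes "replacement_rule p" "fixation_axiom p" "assumption1 p" "0 < \<nu>" "\<nu> < 1"
  obtains g0 es where "fixation_model p \<nu> g0 es"
proof -
  obtain g0 and es :: "'a event list" where es: "\<forall>k < length es. es ! k \<in> events \<and> (\<forall>x. 0 < p x (es ! k))"
    and g0: "\<exists>k < length es. g0 \<in> fst (es ! k)" and lineage: "\<forall>h. foldr (\<circ>) (map snd es) id h = g0"
    using assms(2) unfolding fixation_axiom_def by blast
  have "\<forall>e\<in>set es. e \<in> events \<and> (\<forall>x. 0 < p x e)"
    using es by (metis in_set_conv_nth)
  moreover have "\<exists>e\<in>set es. g0 \<in> fst e" using g0 by (auto intro: nth_mem)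
  ultimately have "fixation_model p \<nu> g0 es"
    using assms lineage by unfold_locales (auto simp: replacement_model_def)
  then show ?thesis by (rule that)
qed

theorem theorem5:
  fixes p :: "('g::finite) set \<Rightarrow> 'g event \<Rightarrow> real" and \<nu> :: real
  assumes "replacement_rule p" and "fixation_axiom p" and "assumption1 p"
    and "0 < \<nu>" and "\<nu> < 1"
  shows "(rho_A p \<nu> > rho_a p \<nu> \<longleftrightarrow> E_RMC p \<nu> (Delta_sel p) > 0)
       \<and> (rho_A p \<nu> > rho_a p \<nu> \<longleftrightarrow> E_RMC p \<nu> (Delta_sel_hat p) > 0)
       \<and> (rho_A p \<nu> > rho_a p \<nu> \<longleftrightarrow>
            (\<exists>D. (E_MSS p \<nu> (Delta_sel p) has_real_derivative D) (at 0 within {0..1}) \<and> D > 0))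
       \<and> (rho_A p \<nu> > rho_a p \<nu> \<longleftrightarrow>
            (\<exists>D. (E_MSS p \<nu> (Delta_sel_hat p) has_real_derivative D) (at 0 within {0..1}) \<and> D > 0))
       \<and> (rho_A p \<nu> > rho_a p \<nu> \<longleftrightarrow> E_MSS p \<nu> freqA 0 > \<nu>)
       \<and> E_MSS p \<nu> freqA 0 = E_MSS p \<nu> (freqA_hat p) 0"
proof -
  obtain g0 es where "fixation_model p \<nu> g0 es"
    using fixation_model_of_axioms[OF assms] .
  then interpret fixation_model p \<nu> g0 es .
  have "Delta_sel p = (\<lambda>x. births (\<lambda>_. 1) x - deaths (\<lambda>_. 1) x)"
    and "Delta_sel_hat p = (\<lambda>x. births (repro_values p) x - deaths (repro_values p) x)"
    by (simp_all add: fun_eq_iff Delta_sel_eq Delta_sel_hat_eq)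
  then show ?thesis
    unfolding nu_less_pi_MSS_0_UNIV_iff[symmetric] E_MSS_freqA_0 E_MSS_freqA_hat_0
    using E_RMC_selection_pos_iff E_MSS_selection_derivative_pos_iff
      death_weight_one_pos death_weight_repro_values_pos
    by simp
qed

end
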